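(* The algebra $\mathcal{T}$ is closed under the induced product.
   Context: $\mathscr{P}$ is the set of partitions and $r_m(\lambda)$ the number of parts of $\lambda$ equal to $m$. The Faulhaber polynomial $F_l$ is the polynomial with zero constant term with $F_l(n)=\sum_{i=1}^n i^{l-1}$ for $n\ge1$. For $k\ge0,l\ge1$, $k+l$ even, $T_{k,l}(\lambda)=-\frac{B_{k+l}}{2(k+l)}(\delta_{l,1}+\delta_{k,0})+\sum_{m\ge1}m^kF_l(r_m(\lambda))$. $\mathcal{T}$ is the $\mathbb{Q}$-algebra generated by the $T_{k,l}$ under the pointwise product. The induced product $f\odot g$ of $f,g:\mathscr{P}\to\mathbb{Q}$ is defined by $\langle f\odot g\rangle_{\vec u}=\langle f\rangle_{\vec u}\langle g\rangle_{\vec u}$, where $\langle f\rangle_{\vec u}=\sum_\lambda f(\lambda)u_{\lambda_1}u_{\lambda_2}\cdots/\sum_\lambda u_{\lambda_1}u_{\lambda_2}\cdots\in\mathbb{Q}[[u_1,u_2,\ldots]]$. *)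

theory Defs
  imports Complex_Main "HOL-Library.Multiset"
begin

text \<open>Bernoulli numbers via the standard recurrence
  \<open>\<Sum>j\<le>n. (n+1 choose j) B_j = 0\<close> for n \<ge> 1, B_0 = 1 (so B_1 = -1/2;
  only even indices \<ge> 2 are used below).\<close>
fun bernoulli_num :: "nat \<Rightarrow> rat" where
  "bernoulli_num n =
     (if n = 0 then 1
      else - (\<Sum>j\<in>{..<n}. of_nat ((n + 1) choose j) * bernoulli_num j) / of_nat (n + 1))"

text \<open>A partition is represented by the multiset of its parts, i.e. a finite
  multiset of positive integers. Functions on partitions are functions
  \<open>nat multiset \<Rightarrow> rat\<close>; only their values on partitions matter.\<close>
definition is_partition :: "nat multiset \<Rightarrow> bool" where
  "is_partition p \<longleftrightarrow> 0 \<notin># p"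

definition r_mult :: "nat \<Rightarrow> nat multiset \<Rightarrow> nat" where
  "r_mult m p = count p m"

text \<open>Faulhaber polynomial evaluated at nonnegative integers:
  \<open>F_l(n) = \<Sum>_{i=1}^n i^{l-1}\<close> (F_l(0) = 0 as F_l has zero constant term).\<close>
definition faulhaber :: "nat \<Rightarrow> nat \<Rightarrow> rat" where
  "faulhaber l n = (\<Sum>i = 1..n. of_nat i ^ (l - 1))"

definition kron :: "nat \<Rightarrow> nat \<Rightarrow> rat" where
  "kron a b = (if a = b then 1 else 0)"

text \<open>\<open>T_{k,l}\<close>; the sum over m \<ge> 1 is restricted to the (finitely many) m
  with \<open>r_m(\<lambda>) > 0\<close>, the other terms vanish since F_l(0) = 0.\<close>
definition T_fun :: "nat \<Rightarrow> nat \<Rightarrow> nat multiset \<Rightarrow> rat" where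
  "T_fun k l p =
     - bernoulli_num (k + l) / (2 * of_nat (k + l)) * (kron l 1 + kron k 0)
     + (\<Sum>m\<in>{m. 1 \<le> m \<and> 0 < r_mult m p}. of_nat m ^ k * faulhaber l (r_mult m p))"

inductive_set T_alg :: "(nat multiset \<Rightarrow> rat) set" where
  gen: "1 \<le> l \<Longrightarrow> even (k + l) \<Longrightarrow> T_fun k l \<in> T_alg"
| const: "(\<lambda>_. c) \<in> T_alg"
| add: "f \<in> T_alg \<Longrightarrow> g \<in> T_alg \<Longrightarrow> (\<lambda>p. f p + g p) \<in> T_alg"
| mult: "f \<in> T_alg \<Longrightarrow> g \<in> T_alg \<Longrightarrow> (\<lambda>p. f p * g p) \<in> T_alg"
| smult: "f \<in> T_alg \<Longrightarrow> (\<lambda>p. c * f p) \<in> T_alg"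

text \<open>An element of \<open>\<rat>[[u_1,u_2,\<dots>]]\<close> is its coefficient function on
  monomials; the monomial \<open>u_{a_1}\<cdots>u_{a_n}\<close> is identified with the multiset
  {#a_1,...,a_n#} (a_i \<ge> 1). Multisets containing 0 correspond to no monomial
  (junk coordinates; all series considered below vanish there).\<close>
type_synonym series = "nat multiset \<Rightarrow> rat"

definition ser_mult :: "series \<Rightarrow> series \<Rightarrow> series" where
  "ser_mult a b \<nu> = (\<Sum>\<mu>\<in>{\<mu>. \<mu> \<subseteq># \<nu>}. a \<mu> * b (\<nu> - \<mu>))"

definition gen_series :: "(nat multiset \<Rightarrow> rat) \<Rightarrow> series" where
  "gen_series f \<nu> = (if is_partition \<nu> then f \<nu> else 0)"

text \<open>\<open>\<langle>f\<rangle>_u\<close>: the quotient of \<open>\<Sum>_\<lambda> f(\<lambda>) u_\<lambda>\<close> by \<open>\<Sum>_\<lambda> u_\<lambda>\<close>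
  (the latter has constant term 1, hence is invertible; the quotient is
  the unique series q with q \<cdot> \<Sum>_\<lambda> u_\<lambda> = \<Sum>_\<lambda> f(\<lambda>) u_\<lambda>).\<close>
definition u_bracket :: "(nat multiset \<Rightarrow> rat) \<Rightarrow> series" where
  "u_bracket f = (THE q. ser_mult q (gen_series (\<lambda>_. 1)) = gen_series f)"

end

theory Submission
  imports Defs "HOL-Library.FuncSet" "HOL-Computational_Algebra.Polynomial"
begin

text \<open>Since \<open>\<Sum>\<^sub>\<lambda> u\<^sub>\<lambda> = \<Prod>\<^sub>m (1 - u\<^sub>m)\<^sup>-\<^sup>1\<close>, the bracket is
  \<open>\<langle>f\<rangle> = (\<Sum>\<^sub>\<lambda> f(\<lambda>) u\<^sub>\<lambda>) \<Prod>\<^sub>m (1 - u\<^sub>m)\<close>, so \<open>f \<odot> g\<close> is the coefficient function of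
  \<open>(\<Sum> f u\<^sub>\<lambda>)(\<Sum> g u\<^sub>\<lambda>) \<Prod>\<^sub>m (1 - u\<^sub>m)\<close>; at a partition it factorises over the part sizes \<open>m\<close>,
  each factor being a one-variable induced product of functions of the multiplicity \<open>r\<^sub>m\<close>.
  By bilinearity it suffices to treat two products of the \<open>T\<^sub>k\<^sub>,\<^sub>l\<close> without constant term.
  Expanding every factor \<open>\<Sum>\<^sub>m m\<^sup>k F\<^sub>l(r\<^sub>m)\<close> and collecting the factors sent to the same part
  size writes \<open>f \<odot> g\<close> as a sum over maps from the factors to the part sizes; the
  moment-cumulant relation turns it into a polynomial in connected sums
  \<open>\<Sum>\<^sub>m m\<^sup>K \<kappa>(r\<^sub>m)\<close>, one for each block of factors. Each \<open>\<kappa>\<close> is a polynomial vanishing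
  at \<open>0\<close> with \<open>\<kappa>(-1-r) = (-1)\<^sup>K \<kappa>(r)\<close>: for blocks of size at least two this follows by
  replacing \<open>F\<^sub>1\<close> by \<open>F\<^sub>1 + 1/2\<close>, which leaves the cumulant unchanged and makes every factor
  symmetric or antisymmetric under \<open>r \<mapsto> -1-r\<close>. Such a \<open>\<kappa>\<close> is a combination of the
  \<open>F\<^sub>j\<close> with \<open>K + j\<close> even, so every connected sum lies in \<open>\<T>\<close>.\<close>

section \<open>Series and the bracket\<close>

lemma finite_submultisets [simp]: "finite {\<mu>. \<mu> \<subseteq># \<nu>}"
proof (rule finite_subset)
  show "{\<mu>. \<mu> \<subseteq># \<nu>} \<subseteq> mset ` {xs. set xs \<subseteq> set_mset \<nu> \<and> length xs \<le> size \<nu>}"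
  proof
    fix \<mu> assume "\<mu> \<in> {\<mu>. \<mu> \<subseteq># \<nu>}"
    moreover obtain xs where "\<mu> = mset xs" by (metis ex_mset)
    ultimately show "\<mu> \<in> mset ` {xs. set xs \<subseteq> set_mset \<nu> \<and> length xs \<le> size \<nu>}"
      by (auto intro!: image_eqI[of _ _ xs] dest: size_mset_mono mset_subset_eqD)
  qed
qed (simp add: finite_lists_length_le)

lemma sum_submultisets_prod_count:
  fixes G :: "'a \<Rightarrow> nat \<Rightarrow> 'b::comm_semiring_1"
  assumes fM: "finite M" and sub: "set_mset \<nu> \<subseteq> M"
  shows "(\<Sum>\<mu>\<in>{\<mu>. \<mu> \<subseteq># \<nu>}. \<Prod>m\<in>M. G m (count \<mu> m)) = (\<Prod>m\<in>M. \<Sum>a\<le>count \<nu> m. G m a)"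
proof -
  define ms where "ms c = (\<Sum>m\<in>M. replicate_mset (c m) m)" for c :: "'a \<Rightarrow> nat"
  have count_ms: "count (ms c) x = (if x \<in> M then c x else 0)" for c x
    unfolding ms_def count_sum using fM by auto
  have "(\<Prod>m\<in>M. \<Sum>a\<le>count \<nu> m. G m a) = (\<Sum>c\<in>PiE M (\<lambda>m. {..count \<nu> m}). \<Prod>m\<in>M. G m (c m))"
    using fM by (rule prod_sum_PiE) auto
  also have "\<dots> = (\<Sum>\<mu>\<in>{\<mu>. \<mu> \<subseteq># \<nu>}. \<Prod>m\<in>M. G m (count \<mu> m))"
  proof (rule sum.reindex_bij_witness[of _ "\<lambda>\<mu>. restrict (count \<mu>) M" ms])
    fix \<mu> assume "\<mu> \<in> {\<mu>. \<mu> \<subseteq># \<nu>}"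
    then have \<mu>: "\<mu> \<subseteq># \<nu>" by simp
    then have "set_mset \<mu> \<subseteq> M" using sub by (meson mset_subset_eqD subset_iff)
    then show "ms (restrict (count \<mu>) M) = \<mu>"
      by (intro multiset_eqI) (auto simp: count_ms count_eq_zero_iff)
    show "restrict (count \<mu>) M \<in> PiE M (\<lambda>m. {..count \<nu> m})"
      using \<mu> by (auto simp: subseteq_mset_def)
  next
    fix c assume c: "c \<in> PiE M (\<lambda>m. {..count \<nu> m})"
    show "(\<Prod>m\<in>M. G m (count (ms c) m)) = (\<Prod>m\<in>M. G m (c m))"
      by (rule prod.cong) (auto simp: count_ms)
    show "restrict (count (ms c)) M = c"
      using c by (auto simp: count_ms PiE_def extensional_def restrict_def)
    show "ms c \<in> {\<mu>. \<mu> \<subseteq># \<nu>}"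
      using c by (auto simp: subseteq_mset_def count_ms PiE_def)
  qed
  finally show ?thesis by simp
qed

lemma sum_submultisets_conv_prod_count:
  fixes G :: "'a \<Rightarrow> nat \<Rightarrow> nat \<Rightarrow> 'b::comm_semiring_1" and H :: "'a \<Rightarrow> nat \<Rightarrow> 'b"
  assumes "finite M" "set_mset \<nu> \<subseteq> M"
  shows "(\<Sum>\<rho>\<in>{\<rho>. \<rho> \<subseteq># \<nu>}. (\<Sum>\<alpha>\<in>{\<alpha>. \<alpha> \<subseteq># \<rho>}. \<Prod>m\<in>M. G m (count \<alpha> m) (count \<rho> m - count \<alpha> m))
            * (\<Prod>m\<in>M. H m (count \<nu> m - count \<rho> m)))
       = (\<Prod>m\<in>M. \<Sum>b\<le>count \<nu> m. (\<Sum>a\<le>b. G m a (b - a)) * H m (count \<nu> m - b))"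
proof -
  have "(\<Sum>\<alpha>\<in>{\<alpha>. \<alpha> \<subseteq># \<rho>}. \<Prod>m\<in>M. G m (count \<alpha> m) (count \<rho> m - count \<alpha> m))
      = (\<Prod>m\<in>M. \<Sum>a\<le>count \<rho> m. G m a (count \<rho> m - a))" if "\<rho> \<subseteq># \<nu>" for \<rho>
    using that assms by (intro sum_submultisets_prod_count[where G = "\<lambda>m a. G m a (count \<rho> m - a)"])
      (auto dest: set_mset_mono)
  then have "(\<Sum>\<rho>\<in>{\<rho>. \<rho> \<subseteq># \<nu>}. (\<Sum>\<alpha>\<in>{\<alpha>. \<alpha> \<subseteq># \<rho>}. \<Prod>m\<in>M. G m (count \<alpha> m) (count \<rho> m - count \<alpha> m))
            * (\<Prod>m\<in>M. H m (count \<nu> m - count \<rho> m)))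
      = (\<Sum>\<rho>\<in>{\<rho>. \<rho> \<subseteq># \<nu>}. \<Prod>m\<in>M. (\<Sum>a\<le>count \<rho> m. G m a (count \<rho> m - a)) * H m (count \<nu> m - count \<rho> m))"
    by (simp add: prod.distrib)
  also have "\<dots> = (\<Prod>m\<in>M. \<Sum>b\<le>count \<nu> m. (\<Sum>a\<le>b. G m a (b - a)) * H m (count \<nu> m - b))"
    using assms by (rule sum_submultisets_prod_count)
  finally show ?thesis .
qed

lemma is_partition_add [simp]: "is_partition (\<mu> + \<nu>) \<longleftrightarrow> is_partition \<mu> \<and> is_partition \<nu>"
  by (simp add: is_partition_def)

lemma is_partition_submultiset: "is_partition p \<Longrightarrow> \<mu> \<subseteq># p \<Longrightarrow> is_partition \<mu>"
  unfolding is_partition_def by (meson mset_subset_eqD)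

lemma is_partition_diff: "is_partition p \<Longrightarrow> is_partition (p - \<mu>)"
  by (simp add: is_partition_submultiset)

lemma not_partition_split:
  assumes "\<not> is_partition \<nu>" "\<mu> \<subseteq># \<nu>"
  shows "\<not> is_partition \<mu> \<or> \<not> is_partition (\<nu> - \<mu>)"
  using assms by (metis is_partition_add subset_mset.add_diff_inverse)

definition ser_one :: series where
  "ser_one \<nu> = (if \<nu> = {#} then 1 else 0)"

lemma ser_mult_commute: "ser_mult a b = ser_mult b a"
proof
  fix \<nu> :: "nat multiset"
  show "ser_mult a b \<nu> = ser_mult b a \<nu>"
    unfolding ser_mult_def
    by (rule sum.reindex_bij_witness[of _ "\<lambda>\<mu>. \<nu> - \<mu>" "\<lambda>\<mu>. \<nu> - \<mu>"])
       (auto simp: subset_mset.diff_diff_right mult.commute)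
qed

lemma ser_mult_assoc: "ser_mult (ser_mult a b) c = ser_mult a (ser_mult b c)"
proof
  fix \<nu> :: "nat multiset"
  let ?I = "Sigma {\<rho>. \<rho> \<subseteq># \<nu>} (\<lambda>\<rho>. {\<mu>. \<mu> \<subseteq># \<rho>})"
  let ?J = "Sigma {\<mu>. \<mu> \<subseteq># \<nu>} (\<lambda>\<mu>. {\<sigma>. \<sigma> \<subseteq># \<nu> - \<mu>})"
  have "ser_mult (ser_mult a b) c \<nu> = (\<Sum>(\<rho>, \<mu>)\<in>?I. a \<mu> * b (\<rho> - \<mu>) * c (\<nu> - \<rho>))"
    unfolding ser_mult_def by (simp add: sum_distrib_right sum.Sigma)
  also have "\<dots> = (\<Sum>(\<mu>, \<sigma>)\<in>?J. a \<mu> * (b \<sigma> * c (\<nu> - \<mu> - \<sigma>)))"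
    by (rule sum.reindex_bij_witness[of _ "\<lambda>(\<mu>, \<sigma>). (\<mu> + \<sigma>, \<mu>)" "\<lambda>(\<rho>, \<mu>). (\<mu>, \<rho> - \<mu>)"])
       (auto simp: subset_eq_diff_conv subset_mset.le_diff_conv2 add.commute diff_diff_add
          intro: subset_mset.order_trans)
  also have "\<dots> = ser_mult a (ser_mult b c) \<nu>"
    unfolding ser_mult_def by (simp add: sum_distrib_left sum.Sigma)
  finally show "ser_mult (ser_mult a b) c \<nu> = ser_mult a (ser_mult b c) \<nu>" .
qed

interpretation ser_mult: abel_semigroup ser_mult
  by unfold_locales (fact ser_mult_assoc ser_mult_commute)+

lemma ser_mult_one_right [simp]: "ser_mult a ser_one = a"
proof
  fix \<nu> :: "nat multiset"
  have "ser_mult a ser_one \<nu> = (\<Sum>\<mu>\<in>{\<mu>. \<mu> \<subseteq># \<nu>}. if \<mu> = \<nu> then a \<mu> else 0)"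
    unfolding ser_mult_def ser_one_def
    by (rule sum.cong) (auto simp: subset_mset.antisym Diff_eq_empty_iff_mset)
  then show "ser_mult a ser_one \<nu> = a \<nu>" by simp
qed

lemma ser_mult_add_left: "ser_mult (\<lambda>\<nu>. a \<nu> + a' \<nu>) b = (\<lambda>\<nu>. ser_mult a b \<nu> + ser_mult a' b \<nu>)"
  unfolding ser_mult_def by (simp add: algebra_simps sum.distrib)

lemma ser_mult_cmult_left: "ser_mult (\<lambda>\<nu>. c * a \<nu>) b = (\<lambda>\<nu>. c * ser_mult a b \<nu>)"
  unfolding ser_mult_def by (simp add: algebra_simps sum_distrib_left)

lemma ser_mult_eq_0_off_partitions:
  assumes "\<And>\<mu>. \<not> is_partition \<mu> \<Longrightarrow> a \<mu> = 0" "\<And>\<mu>. \<not> is_partition \<mu> \<Longrightarrow> b \<mu> = 0"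
    and "\<not> is_partition \<nu>"
  shows "ser_mult a b \<nu> = 0"
  unfolding ser_mult_def by (rule sum.neutral) (use assms not_partition_split in fastforce)

definition partition_series :: series where
  "partition_series = gen_series (\<lambda>_. 1)"

text \<open>The series \<open>\<Prod>\<^sub>m (1 - u\<^sub>m)\<close>.\<close>
definition partition_series_inv :: series where
  "partition_series_inv \<nu> =
     (if is_partition \<nu> then \<Prod>m\<in>set_mset \<nu>. coeff [:1, -1:] (count \<nu> m) else 0)"

lemma partition_series_inv_eq_prod:
  assumes "is_partition p" "\<nu> \<subseteq># p"
  shows "partition_series_inv \<nu> = (\<Prod>m\<in>set_mset p. coeff [:1, -1:] (count \<nu> m))"
proof -
  have "set_mset \<nu> \<subseteq> set_mset p" using assms(2) by (rule set_mset_mono)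
  then have "(\<Prod>m\<in>set_mset \<nu>. coeff [:1, -1:] (count \<nu> m)) = (\<Prod>m\<in>set_mset p. coeff [:1, -1:] (count \<nu> m))"
    by (intro prod.mono_neutral_left) (auto simp: not_in_iff)
  then show ?thesis using assms by (simp add: partition_series_inv_def is_partition_submultiset)
qed

lemma sum_coeff_one_minus_X: "(\<Sum>a\<le>c. coeff [:1, -1::rat:] a) = (if c = 0 then 1 else 0)"
  by (induction c) (auto simp: coeff_pCons split: nat.split)

lemma partition_series_inv_mult: "ser_mult partition_series_inv partition_series = ser_one"
proof
  fix \<nu> :: "nat multiset"
  show "ser_mult partition_series_inv partition_series \<nu> = ser_one \<nu>"
  proof (cases "is_partition \<nu>")
    case False
    then have "\<nu> \<noteq> {#}" by (auto simp: is_partition_def)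
    moreover have "ser_mult partition_series_inv partition_series \<nu> = 0"
      using False by (intro ser_mult_eq_0_off_partitions)
        (simp_all add: partition_series_inv_def partition_series_def gen_series_def)
    ultimately show ?thesis by (simp add: ser_one_def)
  next
    case True
    have "ser_mult partition_series_inv partition_series \<nu> =
        (\<Sum>\<mu>\<in>{\<mu>. \<mu> \<subseteq># \<nu>}. \<Prod>m\<in>set_mset \<nu>. coeff [:1, -1:] (count \<mu> m))"
      unfolding ser_mult_def partition_series_def gen_series_def
      using True by (intro sum.cong) (auto simp: partition_series_inv_eq_prod is_partition_diff)
    also have "\<dots> = (\<Prod>m\<in>set_mset \<nu>. if count \<nu> m = 0 then 1 else 0)"
      by (subst sum_submultisets_prod_count) (auto simp: sum_coeff_one_minus_X)
    also have "\<dots> = ser_one \<nu>"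
      by (cases "\<nu> = {#}") (auto simp: ser_one_def)
    finally show ?thesis .
  qed
qed

lemma u_bracket_eq: "u_bracket f = ser_mult (gen_series f) partition_series_inv"
  unfolding u_bracket_def partition_series_def[symmetric]
proof (rule the_equality)
  show "ser_mult (ser_mult (gen_series f) partition_series_inv) partition_series = gen_series f"
    by (simp add: ser_mult.assoc partition_series_inv_mult)
  fix q assume "ser_mult q partition_series = gen_series f"
  then show "q = ser_mult (gen_series f) partition_series_inv"
    by (metis ser_mult.assoc ser_mult.commute partition_series_inv_mult ser_mult_one_right)
qed

lemma u_bracket_cong: "(\<And>p. is_partition p \<Longrightarrow> f p = g p) \<Longrightarrow> u_bracket f = u_bracket g"
  unfolding u_bracket_def gen_series_def by (metis (no_types, lifting))

text \<open>On partitions this is the induced product \<open>f \<odot> g\<close> (\<open>u_bracket_induced_prod\<close>).\<close>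
definition induced_prod :: "(nat multiset \<Rightarrow> rat) \<Rightarrow> (nat multiset \<Rightarrow> rat) \<Rightarrow> nat multiset \<Rightarrow> rat" where
  "induced_prod f g = ser_mult (ser_mult (gen_series f) (gen_series g)) partition_series_inv"

lemma u_bracket_induced_prod:
  "u_bracket (induced_prod f g) = ser_mult (u_bracket f) (u_bracket g)"
proof -
  have "gen_series (induced_prod f g) = induced_prod f g"
    unfolding induced_prod_def gen_series_def
    by (intro ext) (auto intro!: ser_mult_eq_0_off_partitions simp: partition_series_inv_def)
  then show ?thesis
    by (simp add: u_bracket_eq induced_prod_def ac_simps)
qed

lemma induced_prod_eq:
  assumes "is_partition p"
  shows "induced_prod f g p =
    (\<Sum>\<rho>\<in>{\<rho>. \<rho> \<subseteq># p}. (\<Sum>\<alpha>\<in>{\<alpha>. \<alpha> \<subseteq># \<rho>}. f \<alpha> * g (\<rho> - \<alpha>)) * partition_series_inv (p - \<rho>))"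
  unfolding induced_prod_def ser_mult_def[of _ partition_series_inv]
proof (intro sum.cong refl arg_cong2[where f = "(*)"])
  fix \<rho> assume "\<rho> \<in> {\<rho>. \<rho> \<subseteq># p}"
  then have "is_partition \<rho>" using assms is_partition_submultiset by blast
  then show "ser_mult (gen_series f) (gen_series g) \<rho> = (\<Sum>\<alpha>\<in>{\<alpha>. \<alpha> \<subseteq># \<rho>}. f \<alpha> * g (\<rho> - \<alpha>))"
    unfolding ser_mult_def gen_series_def
    by (intro sum.cong) (auto simp: is_partition_submultiset is_partition_diff)
qed

lemma gen_series_add: "gen_series (\<lambda>p. f p + g p) = (\<lambda>\<nu>. gen_series f \<nu> + gen_series g \<nu>)"
  by (auto simp: gen_series_def)

lemma gen_series_cmult: "gen_series (\<lambda>p. c * f p) = (\<lambda>\<nu>. c * gen_series f \<nu>)"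
  by (auto simp: gen_series_def)

lemma induced_prod_add_left:
  "induced_prod (\<lambda>p. f p + f' p) g = (\<lambda>p. induced_prod f g p + induced_prod f' g p)"
  unfolding induced_prod_def by (simp add: gen_series_add ser_mult_add_left)

lemma induced_prod_cmult_left: "induced_prod (\<lambda>p. c * f p) g = (\<lambda>p. c * induced_prod f g p)"
  unfolding induced_prod_def by (simp add: gen_series_cmult ser_mult_cmult_left)

lemma induced_prod_commute: "induced_prod f g = induced_prod g f"
  unfolding induced_prod_def by (simp add: ser_mult.commute)

section \<open>The algebra \<open>\<T>\<close> on partitions\<close>

text \<open>Functions are compared on partitions only: the bracket ignores all other values
  (\<open>u_bracket_cong\<close>).\<close>
definition T_on_partitions :: "(nat multiset \<Rightarrow> rat) \<Rightarrow> bool" where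
  "T_on_partitions f \<longleftrightarrow> (\<exists>h\<in>T_alg. \<forall>p. is_partition p \<longrightarrow> h p = f p)"

lemma T_on_partitions_if_T_alg: "f \<in> T_alg \<Longrightarrow> T_on_partitions f"
  unfolding T_on_partitions_def by blast

lemma T_on_partitions_const: "T_on_partitions (\<lambda>_. c)"
  by (intro T_on_partitions_if_T_alg T_alg.const)

lemma T_on_partitions_add:
  "T_on_partitions f \<Longrightarrow> T_on_partitions g \<Longrightarrow> T_on_partitions (\<lambda>p. f p + g p)"
  unfolding T_on_partitions_def by (metis (no_types, lifting) T_alg.add)

lemma T_on_partitions_mult:
  "T_on_partitions f \<Longrightarrow> T_on_partitions g \<Longrightarrow> T_on_partitions (\<lambda>p. f p * g p)"
  unfolding T_on_partitions_def by (metis (no_types, lifting) T_alg.mult)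

lemma T_on_partitions_cmult: "T_on_partitions f \<Longrightarrow> T_on_partitions (\<lambda>p. c * f p)"
  unfolding T_on_partitions_def by (metis (no_types, lifting) T_alg.smult)

lemma T_on_partitions_cong:
  "T_on_partitions f \<Longrightarrow> (\<And>p. is_partition p \<Longrightarrow> f p = g p) \<Longrightarrow> T_on_partitions g"
  unfolding T_on_partitions_def by metis

lemma T_on_partitions_sum:
  "(\<And>i. i \<in> I \<Longrightarrow> T_on_partitions (F i)) \<Longrightarrow> T_on_partitions (\<lambda>p. \<Sum>i\<in>I. F i p)"
proof (induction I rule: infinite_finite_induct)
  case (insert i I)
  then show ?case by (simp add: T_on_partitions_add)
qed (simp_all add: T_on_partitions_const)

definition T0_fun :: "nat \<Rightarrow> nat \<Rightarrow> nat multiset \<Rightarrow> rat" where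
  "T0_fun k l p = (\<Sum>m\<in>{m. 1 \<le> m \<and> 0 < r_mult m p}. of_nat m ^ k * faulhaber l (r_mult m p))"

lemma T_fun_eq_const_plus_T0_fun:
  "T_fun k l p = - bernoulli_num (k + l) / (2 * of_nat (k + l)) * (kron l 1 + kron k 0) + T0_fun k l p"
  by (simp add: T_fun_def T0_fun_def)

lemma T0_fun_in_T_alg:
  assumes "1 \<le> l" "even (k + l)"
  shows "T0_fun k l \<in> T_alg"
proof -
  define c where "c = - bernoulli_num (k + l) / (2 * of_nat (k + l)) * (kron l 1 + kron k 0)"
  have "(\<lambda>p. T_fun k l p + (- c)) \<in> T_alg"
    using assms by (intro T_alg.add T_alg.gen T_alg.const)
  then show ?thesis by (simp add: T_fun_eq_const_plus_T0_fun c_def)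
qed

lemma T0_fun_eq_sum:
  assumes "is_partition p" "\<alpha> \<subseteq># p"
  shows "T0_fun k l \<alpha> = (\<Sum>m\<in>set_mset p. of_nat m ^ k * faulhaber l (count \<alpha> m))"
  unfolding T0_fun_def r_mult_def
proof (rule sum.mono_neutral_left)
  show "{m. 1 \<le> m \<and> 0 < count \<alpha> m} \<subseteq> set_mset p"
    using assms(2) by (auto dest: mset_subset_eqD)
  show "\<forall>m\<in>set_mset p - {m. 1 \<le> m \<and> 0 < count \<alpha> m}. of_nat m ^ k * faulhaber l (count \<alpha> m) = 0"
    using assms(1) by (auto simp: faulhaber_def is_partition_def Suc_le_eq)
qed simp

definition T0_monomial :: "(nat \<times> nat) list \<Rightarrow> nat multiset \<Rightarrow> rat" where
  "T0_monomial ks p = prod_list (map (\<lambda>(k, l). T0_fun k l p) ks)"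

definition admissible_indices :: "(nat \<times> nat) list \<Rightarrow> bool" where
  "admissible_indices ks \<longleftrightarrow> (\<forall>(k, l)\<in>set ks. 1 \<le> l \<and> even (k + l))"

inductive_set T0_span :: "(nat multiset \<Rightarrow> rat) set" where
  monomial: "admissible_indices ks \<Longrightarrow> T0_monomial ks \<in> T0_span"
| add: "f \<in> T0_span \<Longrightarrow> g \<in> T0_span \<Longrightarrow> (\<lambda>p. f p + g p) \<in> T0_span"
| cmult: "f \<in> T0_span \<Longrightarrow> (\<lambda>p. c * f p) \<in> T0_span"

lemma T0_span_const: "(\<lambda>_. c) \<in> T0_span"
proof -
  have "(\<lambda>p. c * T0_monomial [] p) \<in> T0_span"
    by (intro T0_span.cmult T0_span.monomial) (simp add: admissible_indices_def)
  then show ?thesis by (simp add: T0_monomial_def)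
qed

lemma T0_span_mult_monomial:
  "g \<in> T0_span \<Longrightarrow> admissible_indices ks \<Longrightarrow> (\<lambda>p. T0_monomial ks p * g p) \<in> T0_span"
proof (induction g rule: T0_span.induct)
  case (monomial ks')
  have "(\<lambda>p. T0_monomial ks p * T0_monomial ks' p) = T0_monomial (ks @ ks')"
    by (simp add: T0_monomial_def fun_eq_iff)
  moreover have "admissible_indices (ks @ ks')"
    using monomial by (auto simp: admissible_indices_def)
  ultimately show ?case by (simp add: T0_span.monomial)
next
  case (add f g)
  then show ?case by (simp add: distrib_left T0_span.add)
next
  case (cmult f c)
  then show ?case by (simp add: mult.left_commute T0_span.cmult)
qed

lemma T0_span_mult: "f \<in> T0_span \<Longrightarrow> g \<in> T0_span \<Longrightarrow> (\<lambda>p. f p * g p) \<in> T0_span"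
proof (induction f rule: T0_span.induct)
  case (monomial ks)
  then show ?case using T0_span_mult_monomial by blast
next
  case (add f f')
  then show ?case by (simp add: distrib_right T0_span.add)
next
  case (cmult f c)
  then show ?case by (simp add: mult.assoc T0_span.cmult)
qed

lemma T_alg_subset_T0_span: "f \<in> T_alg \<Longrightarrow> f \<in> T0_span"
proof (induction f rule: T_alg.induct)
  case (gen l k)
  then have "T0_monomial [(k, l)] \<in> T0_span"
    by (intro T0_span.monomial) (simp add: admissible_indices_def)
  then have "(\<lambda>p. (- bernoulli_num (k + l) / (2 * of_nat (k + l)) * (kron l 1 + kron k 0))
      + T0_monomial [(k, l)] p) \<in> T0_span"
    by (intro T0_span.add T0_span_const)
  then show ?case by (simp add: T0_monomial_def T_fun_eq_const_plus_T0_fun[abs_def])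
qed (simp_all add: T0_span_const T0_span.add T0_span_mult T0_span.cmult)

section \<open>Sums and polynomial functions on the integers\<close>

definition int_psum :: "(int \<Rightarrow> rat) \<Rightarrow> int \<Rightarrow> rat" where
  "int_psum g n = (if 0 \<le> n then \<Sum>a\<in>{0..n}. g a else - (\<Sum>a\<in>{n+1..-1}. g a))"

lemma int_psum_minus_one [simp]: "int_psum g (-1) = 0"
  by (simp add: int_psum_def)

lemma int_psum_diff: "int_psum g n - int_psum g (n - 1) = g n"
proof -
  consider "1 \<le> n" | "n = 0" | "n \<le> -1" by linarith
  then show ?thesis
  proof cases
    case 1
    then have "{0..n} = insert n {0..n-1}" by auto
    then show ?thesis using 1 by (simp add: int_psum_def)
  next
    case 2
    then show ?thesis by (simp add: int_psum_def)
  next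
    case 3
    then have "{n..-1} = insert n {n+1..-1}" by auto
    then show ?thesis using 3 by (simp add: int_psum_def)
  qed
qed

lemma int_fun_shift_invariant:
  fixes D :: "int \<Rightarrow> 'a"
  assumes "\<And>n. D n = D (n - 1)"
  shows "D n = D m"
proof -
  have "D n = D 0" for n
  proof (induction n rule: int_induct[where k=0])
    case (step1 i) then show ?case using assms[of "i + 1"] by simp
  next
    case (step2 i) then show ?case using assms[of i] by simp
  qed simp
  then show ?thesis by metis
qed

lemma int_psum_unique:
  assumes "\<And>n. S n - S (n - 1) = g n" and "S (-1) = 0"
  shows "S n = int_psum g n"
proof -
  define D where "D n = S n - int_psum g n" for n
  have "D n = D (n - 1)" for n
    using assms(1)[of n] int_psum_diff[of g n] by (simp add: D_def)
  then have "D n = D (-1)" by (rule int_fun_shift_invariant)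
  then show ?thesis using assms(2) by (simp add: D_def)
qed

lemma int_psum_telescope: "int_psum (\<lambda>a. h a - h (a - 1)) n = h n - h (-1)"
  by (rule int_psum_unique[where S = "\<lambda>n. h n - h (-1)", symmetric]) simp_all

lemma int_psum_add: "int_psum (\<lambda>a. f a + g a) n = int_psum f n + int_psum g n"
  by (simp add: int_psum_def sum.distrib)

lemma int_psum_cmult: "int_psum (\<lambda>a. c * f a) n = c * int_psum f n"
  by (simp add: int_psum_def sum_distrib_left)

lemma int_psum_sum: "int_psum (\<lambda>a. \<Sum>i\<in>I. F i a) n = (\<Sum>i\<in>I. int_psum (F i) n)"
  by (induction I rule: infinite_finite_induct) (simp_all add: int_psum_add, simp_all add: int_psum_def)

lemma int_psum_of_nat: "int_psum g (int c) = (\<Sum>a\<le>c. g (int a))"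
proof -
  have "(\<Sum>a\<in>{0..int c}. g a) = (\<Sum>a\<in>int ` {..c}. g a)"
    by (rule sum.cong) (auto simp: image_iff intro!: bexI[where x="nat _"])
  then show ?thesis by (simp add: int_psum_def sum.reindex)
qed

definition int_poly_fun :: "(int \<Rightarrow> rat) \<Rightarrow> bool" where
  "int_poly_fun f \<longleftrightarrow> (\<exists>p. \<forall>n. f n = poly p (of_int n))"

lemma int_poly_fun_const: "int_poly_fun (\<lambda>_. c)"
  unfolding int_poly_fun_def by (rule exI[of _ "[:c:]"]) simp

lemma int_poly_fun_of_int: "int_poly_fun of_int"
  unfolding int_poly_fun_def by (rule exI[of _ "[:0, 1:]"]) simp

lemma int_poly_fun_add: "int_poly_fun f \<Longrightarrow> int_poly_fun g \<Longrightarrow> int_poly_fun (\<lambda>n. f n + g n)"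
  unfolding int_poly_fun_def by (metis poly_add)

lemma int_poly_fun_diff: "int_poly_fun f \<Longrightarrow> int_poly_fun g \<Longrightarrow> int_poly_fun (\<lambda>n. f n - g n)"
  unfolding int_poly_fun_def by (metis poly_diff)

lemma int_poly_fun_uminus: "int_poly_fun f \<Longrightarrow> int_poly_fun (\<lambda>n. - f n)"
  unfolding int_poly_fun_def by (metis poly_minus)

lemma int_poly_fun_mult: "int_poly_fun f \<Longrightarrow> int_poly_fun g \<Longrightarrow> int_poly_fun (\<lambda>n. f n * g n)"
  unfolding int_poly_fun_def by (metis poly_mult)

lemma int_poly_fun_power: "int_poly_fun f \<Longrightarrow> int_poly_fun (\<lambda>n. f n ^ j)"
  by (induction j) (simp_all add: int_poly_fun_const int_poly_fun_mult)

lemma int_poly_fun_sum: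
  "(\<And>i. i \<in> I \<Longrightarrow> int_poly_fun (F i)) \<Longrightarrow> int_poly_fun (\<lambda>n. \<Sum>i\<in>I. F i n)"
  by (induction I rule: infinite_finite_induct) (simp_all add: int_poly_fun_const int_poly_fun_add)

lemma int_poly_fun_prod:
  "(\<And>i. i \<in> I \<Longrightarrow> int_poly_fun (F i)) \<Longrightarrow> int_poly_fun (\<lambda>n. \<Prod>i\<in>I. F i n)"
  by (induction I rule: infinite_finite_induct) (simp_all add: int_poly_fun_const int_poly_fun_mult)

lemma int_poly_fun_shift: "int_poly_fun f \<Longrightarrow> int_poly_fun (\<lambda>n. f (n - 1))"
  unfolding int_poly_fun_def
proof (elim exE)
  fix p assume "\<forall>n. f n = poly p (of_int n)"
  then show "\<exists>q. \<forall>n. f (n - 1) = poly q (of_int n)"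
    by (intro exI[of _ "pcompose p [:-1, 1:]"]) (simp add: poly_pcompose)
qed

lemma int_poly_fun_int_psum_power: "int_poly_fun (int_psum (\<lambda>a. of_int a ^ d))"
proof (induction d rule: less_induct)
  case (less d)
  define e where "e = Suc d"
  define S where "S j = int_psum (\<lambda>a. of_int a ^ j)" for j
  define c where "c j = (of_nat (e choose j) :: rat)" for j
  have binomial: "(of_int a + 1) ^ e - of_int a ^ e = (\<Sum>j<e. c j * of_int a ^ j)" for a :: int
    unfolding binomial_ring[of "of_int a" 1 e] lessThan_Suc_atMost[symmetric] sum.lessThan_Suc
    by (simp add: c_def mult.commute)
  have "(of_int n + 1) ^ e = (\<Sum>j<e. c j * S j n)" for n
  proof -
    have "(of_int n + 1) ^ e - (of_int (-1) + 1) ^ e = int_psum (\<lambda>a. \<Sum>j<e. c j * of_int a ^ j) n"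
      unfolding binomial[symmetric] using int_psum_telescope[of "\<lambda>a. (of_int a + 1) ^ e" n] by simp
    moreover have "(0 :: rat) ^ e = 0" by (simp add: e_def)
    ultimately show ?thesis by (simp add: int_psum_sum int_psum_cmult S_def)
  qed
  then have "S d n = ((of_int n + 1) ^ e - (\<Sum>j<d. c j * S j n)) / of_nat e" for n
    unfolding e_def sum.lessThan_Suc by (simp add: c_def e_def field_simps)
  moreover have "int_poly_fun (\<lambda>n. ((of_int n + 1) ^ e - (\<Sum>j<d. c j * S j n)) / of_nat e)"
    using less unfolding divide_inverse S_def
    by (intro int_poly_fun_mult int_poly_fun_diff int_poly_fun_power int_poly_fun_add
        int_poly_fun_sum int_poly_fun_of_int int_poly_fun_const) auto
  ultimately show ?case by (simp add: S_def[symmetric])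
qed

lemma int_poly_fun_int_psum: "int_poly_fun g \<Longrightarrow> int_poly_fun (int_psum g)"
proof -
  assume "int_poly_fun g"
  then obtain p where g: "g = (\<lambda>n. poly p (of_int n))" unfolding int_poly_fun_def by blast
  have "int_psum g = (\<lambda>n. \<Sum>j\<le>degree p. coeff p j * int_psum (\<lambda>a. of_int a ^ j) n)"
    unfolding g poly_altdef by (simp add: fun_eq_iff int_psum_sum int_psum_cmult)
  then show ?thesis
    by (simp add: int_poly_fun_sum int_poly_fun_mult int_poly_fun_const int_poly_fun_int_psum_power)
qed

text \<open>The Faulhaber polynomial \<open>F\<^sub>l\<close> on the integers; the correction removes the summand
  \<open>0\<^sup>0 = 1\<close> of \<^const>\<open>int_psum\<close> when \<open>l = 1\<close>.\<close>
definition faulhaber_int :: "nat \<Rightarrow> int \<Rightarrow> rat" where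
  "faulhaber_int l n = int_psum (\<lambda>i. of_int i ^ (l - 1)) n - 0 ^ (l - 1)"

lemma faulhaber_int_diff: "faulhaber_int l n - faulhaber_int l (n - 1) = of_int n ^ (l - 1)"
  using int_psum_diff[of "\<lambda>i. of_int i ^ (l - 1)" n] by (simp add: faulhaber_int_def)

lemma faulhaber_int_0 [simp]: "faulhaber_int l 0 = 0"
  by (simp add: faulhaber_int_def int_psum_def)

lemma faulhaber_int_of_nat: "faulhaber_int l (int c) = faulhaber l c"
proof -
  have "{..c} = insert 0 {1..c}" by auto
  then show ?thesis by (simp add: faulhaber_int_def int_psum_of_nat faulhaber_def)
qed

lemma int_poly_fun_faulhaber_int: "int_poly_fun (faulhaber_int l)"
  unfolding faulhaber_int_def[abs_def]
  by (intro int_poly_fun_diff int_poly_fun_int_psum int_poly_fun_power int_poly_fun_of_int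
      int_poly_fun_const)

lemma faulhaber_int_reflect:
  assumes "1 \<le> l"
  shows "faulhaber_int l (-1 - r) = (-1) ^ l * faulhaber_int l r - (if l = 1 then 1 else 0)"
proof -
  obtain j where l: "l = Suc j" using assms by (cases l) auto
  define H where "H r = faulhaber_int l (-1 - r) - (-1) ^ l * faulhaber_int l r" for r
  have "H n = H (n - 1)" for n
  proof -
    have "-1 - (n - 1) = -n" "-1 - n = -n - 1" by simp_all
    then have "faulhaber_int l (-1 - (n - 1)) - faulhaber_int l (-1 - n) = of_int (-n) ^ (l - 1)"
      using faulhaber_int_diff[of l "-n"] by (simp only:)
    moreover have "(of_int (-n) :: rat) ^ (l - 1) = - ((-1) ^ l * of_int n ^ (l - 1))"
      by (simp add: l power_minus[of "of_int n"])
    ultimately show ?thesis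
      using faulhaber_int_diff[of l n] by (simp add: H_def algebra_simps)
  qed
  then have "H r = H 0" by (rule int_fun_shift_invariant)
  moreover have "H 0 = (if l = 1 then -1 else 0)"
    by (simp add: H_def faulhaber_int_def int_psum_def l)
  ultimately show ?thesis by (simp add: H_def algebra_simps)
qed

definition faulhaber_int_sym :: "nat \<Rightarrow> int \<Rightarrow> rat" where
  "faulhaber_int_sym l r = faulhaber_int l r + (if l = 1 then 1/2 else 0)"

lemma faulhaber_int_sym_reflect:
  "1 \<le> l \<Longrightarrow> faulhaber_int_sym l (-1 - r) = (-1) ^ l * faulhaber_int_sym l r"
  by (simp add: faulhaber_int_sym_def faulhaber_int_reflect)

section \<open>The induced product for a single part size\<close>

definition int_conv :: "(int \<Rightarrow> rat) \<Rightarrow> (int \<Rightarrow> rat) \<Rightarrow> int \<Rightarrow> rat" where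
  "int_conv \<phi> \<psi> n = int_psum (\<lambda>a. \<phi> a * \<psi> (n - a)) n"

definition int_induced_prod :: "(int \<Rightarrow> rat) \<Rightarrow> (int \<Rightarrow> rat) \<Rightarrow> int \<Rightarrow> rat" where
  "int_induced_prod \<phi> \<psi> n = int_conv \<phi> \<psi> n - int_conv \<phi> \<psi> (n - 1)"

definition nat_induced_prod :: "(nat \<Rightarrow> rat) \<Rightarrow> (nat \<Rightarrow> rat) \<Rightarrow> nat \<Rightarrow> rat" where
  "nat_induced_prod \<phi> \<psi> n = (\<Sum>b\<le>n. (\<Sum>a\<le>b. \<phi> a * \<psi> (b - a)) * coeff [:1, -1:] (n - b))"

lemma nat_induced_prod_eq_int_induced_prod:
  "nat_induced_prod (\<lambda>a. \<phi> (int a)) (\<lambda>b. \<psi> (int b)) c = int_induced_prod \<phi> \<psi> (int c)"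
proof -
  define D where "D b = (\<Sum>a\<le>b. \<phi> (int a) * \<psi> (int (b - a)))" for b
  have D: "D b = int_conv \<phi> \<psi> (int b)" for b
    unfolding D_def int_conv_def int_psum_of_nat by (rule sum.cong) auto
  have "nat_induced_prod (\<lambda>a. \<phi> (int a)) (\<lambda>b. \<psi> (int b)) c = (\<Sum>b\<le>c. D b * coeff [:1, -1:] (c - b))"
    by (simp add: nat_induced_prod_def D_def)
  also have "\<dots> = D c - (if c = 0 then 0 else D (c - 1))"
  proof (cases c)
    case (Suc c')
    have "(\<Sum>b\<le>c'. D b * coeff [:1, -1:] (Suc c' - b)) = - D c'"
    proof (cases c')
      case (Suc c'')
      have "(\<Sum>b\<le>c''. D b * coeff [:1, -1:] (Suc (Suc c'') - b)) = 0"
        by (rule sum.neutral) (auto simp: Suc_diff_le coeff_pCons split: nat.split)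
      then show ?thesis using Suc by simp
    qed simp
    then show ?thesis using Suc by simp
  qed simp
  also have "\<dots> = int_induced_prod \<phi> \<psi> (int c)"
    by (cases c) (auto simp: int_induced_prod_def D int_conv_def)
  finally show ?thesis .
qed

lemma int_induced_prod_0: "int_induced_prod \<phi> \<psi> 0 = \<phi> 0 * \<psi> 0"
  by (simp add: int_induced_prod_def int_conv_def int_psum_def)

lemma int_induced_prod_one_right: "int_induced_prod \<phi> (\<lambda>_. 1) n = \<phi> n"
  by (simp add: int_induced_prod_def int_conv_def int_psum_diff)

lemma int_induced_prod_commute: "int_induced_prod \<phi> \<psi> = int_induced_prod \<psi> \<phi>"
proof -
  have "int_conv \<phi> \<psi> n = int_conv \<psi> \<phi> n" for n
  proof (cases "0 \<le> n")
    case True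
    have "(\<Sum>a\<in>{0..n}. \<phi> a * \<psi> (n - a)) = (\<Sum>a\<in>{0..n}. \<psi> a * \<phi> (n - a))"
      by (rule sum.reindex_bij_witness[of _ "\<lambda>a. n - a" "\<lambda>a. n - a"]) auto
    then show ?thesis using True by (simp add: int_conv_def int_psum_def)
  next
    case False
    have "(\<Sum>a\<in>{n+1..-1}. \<phi> a * \<psi> (n - a)) = (\<Sum>a\<in>{n+1..-1}. \<psi> a * \<phi> (n - a))"
      by (rule sum.reindex_bij_witness[of _ "\<lambda>a. n - a" "\<lambda>a. n - a"]) auto
    then show ?thesis using False by (simp add: int_conv_def int_psum_def)
  qed
  then show ?thesis by (simp add: fun_eq_iff int_induced_prod_def)
qed

lemma int_induced_prod_add_left:
  "int_induced_prod (\<lambda>a. \<phi> a + c * \<phi>' a) \<psi> n = int_induced_prod \<phi> \<psi> n + c * int_induced_prod \<phi>' \<psi> n"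
proof -
  have "(\<phi> a + c * \<phi>' a) * \<psi> b = \<phi> a * \<psi> b + c * (\<phi>' a * \<psi> b)" for a b
    by (simp add: algebra_simps)
  then show ?thesis
    by (simp only: int_induced_prod_def int_conv_def int_psum_add int_psum_cmult) (simp add: algebra_simps)
qed

lemma int_conv_reflect_nonneg:
  assumes \<phi>: "\<And>x. \<phi> (-1 - x) = s1 * \<phi> x" and \<psi>: "\<And>x. \<psi> (-1 - x) = s2 * \<psi> x" and "0 \<le> n"
  shows "int_conv \<phi> \<psi> (-2 - n) = - (s1 * s2) * int_conv \<phi> \<psi> n"
proof -
  have "int_conv \<phi> \<psi> (-2 - n) = - (\<Sum>a\<in>{-1-n..-1}. \<phi> a * \<psi> (-2 - n - a))"
    using assms(3) by (simp add: int_conv_def int_psum_def)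
  also have "(\<Sum>a\<in>{-1-n..-1}. \<phi> a * \<psi> (-2 - n - a)) = (\<Sum>b\<in>{0..n}. \<phi> (-1 - b) * \<psi> (-2 - n - (-1 - b)))"
    by (rule sum.reindex_bij_witness[of _ "\<lambda>b. -1 - b" "\<lambda>a. -1 - a"]) auto
  also have "\<dots> = (\<Sum>b\<in>{0..n}. \<phi> (-1 - b) * \<psi> (-1 - (n - b)))"
    by (simp add: algebra_simps)
  also have "\<dots> = (s1 * s2) * int_conv \<phi> \<psi> n"
    using assms(3) by (simp only: \<phi> \<psi>) (simp add: int_conv_def int_psum_def sum_distrib_left algebra_simps)
  finally show ?thesis by simp
qed

lemma int_induced_prod_reflect:
  assumes \<phi>: "\<And>x. \<phi> (-1 - x) = s1 * \<phi> x" and \<psi>: "\<And>x. \<psi> (-1 - x) = s2 * \<psi> x"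
    and s: "(s1 * s2) * (s1 * s2) = 1"
  shows "int_induced_prod \<phi> \<psi> (-1 - n) = (s1 * s2) * int_induced_prod \<phi> \<psi> n"
proof -
  have conv: "int_conv \<phi> \<psi> (-2 - n) = - (s1 * s2) * int_conv \<phi> \<psi> n" for n
  proof -
    consider "0 \<le> n" | "n = -1" | "n \<le> -2" by linarith
    then show ?thesis
    proof cases
      case 1
      then show ?thesis by (rule int_conv_reflect_nonneg[of \<phi> s1 \<psi> s2, OF \<phi> \<psi>])
    next
      case 2
      then show ?thesis by (simp add: int_conv_def)
    next
      case 3
      then have "int_conv \<phi> \<psi> (-2 - (-2 - n)) = - (s1 * s2) * int_conv \<phi> \<psi> (-2 - n)"
        by (intro int_conv_reflect_nonneg[of \<phi> s1 \<psi> s2, OF \<phi> \<psi>]) simp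
      then have "(s1 * s2) * int_conv \<phi> \<psi> n = - ((s1 * s2) * (s1 * s2)) * int_conv \<phi> \<psi> (-2 - n)"
        by simp
      then show ?thesis using s by (simp add: algebra_simps)
    qed
  qed
  have "int_conv \<phi> \<psi> (-1 - n) = - (s1 * s2) * int_conv \<phi> \<psi> (n - 1)"
    using conv[of "n - 1"] by simp
  moreover have "int_conv \<phi> \<psi> (-1 - n - 1) = - (s1 * s2) * int_conv \<phi> \<psi> n"
    using conv[of n] by (simp add: diff_diff_add)
  ultimately show ?thesis unfolding int_induced_prod_def by (simp add: algebra_simps)
qed

lemma int_poly_fun_int_conv:
  assumes "int_poly_fun \<phi>" "int_poly_fun \<psi>"
  shows "int_poly_fun (int_conv \<phi> \<psi>)"
proof -
  obtain p where p: "\<And>n. \<psi> n = poly p (of_int n)" using assms(2) unfolding int_poly_fun_def by blast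
  define c where "c j t = coeff p j * of_nat (j choose t)" for j t
  have "int_conv \<phi> \<psi> n =
      (\<Sum>j\<le>degree p. \<Sum>t\<le>j. c j t * of_int n ^ t * int_psum (\<lambda>a. \<phi> a * (- of_int a) ^ (j - t)) n)" for n
  proof -
    have "\<psi> (n - a) = (\<Sum>j\<le>degree p. coeff p j * (of_int n + (- of_int a)) ^ j)" for a
      by (simp add: p poly_altdef)
    also have "\<dots> a = (\<Sum>j\<le>degree p. \<Sum>t\<le>j. c j t * of_int n ^ t * (- of_int a) ^ (j - t))" for a
      unfolding binomial_ring c_def by (simp add: sum_distrib_left mult.assoc)
    finally have "\<psi> (n - a) = (\<Sum>j\<le>degree p. \<Sum>t\<le>j. c j t * of_int n ^ t * (- of_int a) ^ (j - t))"
      for a .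
    then show ?thesis
      by (simp add: int_conv_def sum_distrib_left int_psum_sum int_psum_cmult[symmetric] algebra_simps)
  qed
  then have "int_conv \<phi> \<psi> =
      (\<lambda>n. \<Sum>j\<le>degree p. \<Sum>t\<le>j. c j t * of_int n ^ t * int_psum (\<lambda>a. \<phi> a * (- of_int a) ^ (j - t)) n)"
    by (simp add: fun_eq_iff)
  then show ?thesis
    by (simp add: int_poly_fun_sum int_poly_fun_mult int_poly_fun_const int_poly_fun_power
        int_poly_fun_of_int int_poly_fun_int_psum assms(1) int_poly_fun_uminus)
qed

lemma int_poly_fun_int_induced_prod:
  "int_poly_fun \<phi> \<Longrightarrow> int_poly_fun \<psi> \<Longrightarrow> int_poly_fun (int_induced_prod \<phi> \<psi>)"
  unfolding int_induced_prod_def[abs_def]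
  by (intro int_poly_fun_diff int_poly_fun_shift int_poly_fun_int_conv)

section \<open>Cumulants\<close>

text \<open>Cumulants of a set function \<open>q\<close> with \<open>q {} = 1\<close>: in the moment-cumulant relation
  \<open>cumulant_rec\<close> the cumulant is carried by the block containing \<open>Min S\<close>.\<close>
function cumulant :: "(nat set \<Rightarrow> 'a \<Rightarrow> rat) \<Rightarrow> nat set \<Rightarrow> 'a \<Rightarrow> rat" where
  "cumulant q S r = (if S = {} \<or> infinite S then 0 else
      q S r - (\<Sum>B\<in>{B. Min S \<in> B \<and> B \<subset> S}. cumulant q B r * q (S - B) r))"
  by pat_completeness auto
termination by (relation "measure (\<lambda>(q, S, r). card S)") (auto simp: psubset_card_mono)

declare cumulant.simps [simp del]

lemma finite_subsets_with: "finite T \<Longrightarrow> finite {B. P B \<and> B \<subseteq> T}"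
  by (rule finite_subset[of _ "Pow T"]) auto

lemma finite_psubsets_with: "finite T \<Longrightarrow> finite {B. P B \<and> B \<subset> T}"
  by (rule finite_subset[of _ "Pow T"]) auto

lemma cumulant_empty [simp]: "cumulant q {} r = 0"
  by (simp add: cumulant.simps)

lemma cumulant_unfold:
  "finite S \<Longrightarrow> S \<noteq> {} \<Longrightarrow>
    cumulant q S r = q S r - (\<Sum>B\<in>{B. Min S \<in> B \<and> B \<subset> S}. cumulant q B r * q (S - B) r)"
  by (simp add: cumulant.simps)

lemma subsets_with_Min_eq:
  assumes "finite S" "S \<noteq> {}"
  shows "{B. Min S \<in> B \<and> B \<subseteq> S} = insert S {B. Min S \<in> B \<and> B \<subset> S}"
proof -
  have "Min S \<in> S" using assms by simp
  then show ?thesis by auto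
qed

lemma cumulant_rec:
  assumes "finite S" "S \<noteq> {}" "q {} r = 1"
  shows "q S r = (\<Sum>B\<in>{B. Min S \<in> B \<and> B \<subseteq> S}. cumulant q B r * q (S - B) r)"
  using assms by (simp add: subsets_with_Min_eq finite_psubsets_with cumulant_unfold)

lemma cumulant_unique:
  assumes "finite T" "q {} r = 1"
    and rec: "\<And>S. S \<subseteq> T \<Longrightarrow> S \<noteq> {} \<Longrightarrow> q S r = (\<Sum>B\<in>{B. Min S \<in> B \<and> B \<subseteq> S}. k B * q (S - B) r)"
  shows "T \<noteq> {} \<Longrightarrow> k T = cumulant q T r"
  using assms(1) rec
proof (induction T rule: finite_psubset_induct)
  case (psubset T)
  have "k B = cumulant q B r" if "B \<in> {B. Min T \<in> B \<and> B \<subset> T}" for B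
    using that psubset by (intro psubset.IH) auto
  then have "(\<Sum>B\<in>{B. Min T \<in> B \<and> B \<subset> T}. k B * q (T - B) r)
      = (\<Sum>B\<in>{B. Min T \<in> B \<and> B \<subset> T}. cumulant q B r * q (T - B) r)"
    by simp
  moreover have "q T r = k T * q {} r + (\<Sum>B\<in>{B. Min T \<in> B \<and> B \<subset> T}. k B * q (T - B) r)"
    using psubset by (simp add: subsets_with_Min_eq finite_psubsets_with)
  ultimately show ?case
    using psubset assms(2) by (simp add: cumulant_unfold)
qed

lemma cumulant_singleton: "cumulant q {x} r = q {x} r"
proof -
  have "cumulant q {x} r = q {x} r - (\<Sum>B\<in>{B. Min {x} \<in> B \<and> B \<subset> {x}}. cumulant q B r * q ({x} - B) r)"
    by (rule cumulant_unfold) simp_all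
  also have "{B. Min {x} \<in> B \<and> B \<subset> {x}} = {}" by auto
  finally show ?thesis by simp
qed

lemma cumulant_eq_0:
  assumes "\<And>T. finite T \<Longrightarrow> T \<noteq> {} \<Longrightarrow> q T r = 0" and "finite T"
  shows "cumulant q T r = 0"
  using assms(2)
proof (induction T rule: finite_psubset_induct)
  case (psubset T)
  then show ?case
    by (cases "T = {}") (auto simp: cumulant_unfold assms(1) intro!: sum.neutral dest: finite_subset)
qed

lemma int_poly_fun_cumulant:
  assumes "\<And>T. int_poly_fun (q T)" and "finite T"
  shows "int_poly_fun (cumulant q T)"
  using assms(2)
proof (induction T rule: finite_psubset_induct)
  case (psubset T)
  show ?case
  proof (cases "T = {}")
    case False
    then have "cumulant q T = (\<lambda>r. q T r - (\<Sum>B\<in>{B. Min T \<in> B \<and> B \<subset> T}. cumulant q B r * q (T - B) r))"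
      using psubset by (simp add: fun_eq_iff cumulant_unfold)
    then show ?thesis
      using psubset by (auto intro!: int_poly_fun_diff int_poly_fun_sum int_poly_fun_mult assms(1))
  qed (simp add: int_poly_fun_const)
qed

lemma cumulant_reflect:
  fixes e :: "nat \<Rightarrow> nat"
  assumes "finite T" and reflect: "\<And>S r. S \<subseteq> T \<Longrightarrow> q S (\<sigma> r) = (-1) ^ (\<Sum>x\<in>S. e x) * q S r"
  shows "cumulant q T (\<sigma> r) = (-1) ^ (\<Sum>x\<in>T. e x) * cumulant q T r"
  using assms(1) reflect
proof (induction T rule: finite_psubset_induct)
  case (psubset T)
  have "cumulant q B (\<sigma> r) * q (T - B) (\<sigma> r) = (-1) ^ (\<Sum>x\<in>T. e x) * (cumulant q B r * q (T - B) r)"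
    if "B \<subset> T" for B
  proof -
    have "(\<Sum>x\<in>T. e x) = (\<Sum>x\<in>B. e x) + (\<Sum>x\<in>T - B. e x)"
      using that psubset(1) by (metis psubset_imp_subset sum.subset_diff add.commute)
    moreover have "cumulant q B (\<sigma> r) = (-1) ^ (\<Sum>x\<in>B. e x) * cumulant q B r"
      using that psubset by (intro psubset.IH) auto
    ultimately show ?thesis
      using psubset(3)[of "T - B"] by (simp add: power_add)
  qed
  then have "(\<Sum>B\<in>{B. Min T \<in> B \<and> B \<subset> T}. cumulant q B (\<sigma> r) * q (T - B) (\<sigma> r))
      = (-1) ^ (\<Sum>x\<in>T. e x) * (\<Sum>B\<in>{B. Min T \<in> B \<and> B \<subset> T}. cumulant q B r * q (T - B) r)"
    by (simp add: sum_distrib_left)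
  then show ?case
    using psubset by (cases "T = {}") (simp_all add: cumulant_unfold right_diff_distrib)
qed

lemma cumulant_rec_Diff_singleton:
  assumes "finite S" "S \<noteq> {}" "q {} r = 1"
  shows "(\<Sum>B\<in>{B. Min S \<in> B \<and> B \<subseteq> S}.
            (if y \<in> S - B then cumulant q B r * q (S - {y} - B) r else 0) + (if B = {y} then q (S - B) r else 0))
         = (if y \<in> S then q (S - {y}) r else 0)"
    (is "(\<Sum>B\<in>?P. ?f B + ?g B) = _")
proof -
  have fin: "finite ?P" using assms(1) by (rule finite_subsets_with)
  consider "y \<notin> S" | "y = Min S" | "y \<in> S" "y \<noteq> Min S" by blast
  then show ?thesis
  proof cases
    case 1
    then show ?thesis by (auto intro!: sum.neutral)
  next
    case 2
    then have "y \<in> S" using assms by simp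
    have "(\<Sum>B\<in>?P. ?f B + ?g B) = (\<Sum>B\<in>?P. if B = {y} then q (S - {y}) r else 0)"
      using 2 by (intro sum.cong) auto
    also have "\<dots> = q (S - {y}) r"
      using fin \<open>y \<in> S\<close> 2 by simp
    finally show ?thesis using \<open>y \<in> S\<close> by simp
  next
    case 3
    have Min: "Min (S - {y}) = Min S"
      using assms 3 by (intro Min_eqI) auto
    have "(\<Sum>B\<in>?P. ?f B + ?g B) = (\<Sum>B\<in>?P. if y \<notin> B then cumulant q B r * q (S - {y} - B) r else 0)"
      using 3 by (intro sum.cong) auto
    also have "\<dots> = (\<Sum>B\<in>{B. Min (S - {y}) \<in> B \<and> B \<subseteq> S - {y}}. cumulant q B r * q (S - {y} - B) r)"
      unfolding Min using fin by (simp add: sum.If_cases) (intro sum.cong, auto)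
    also have "\<dots> = q (S - {y}) r"
    proof (rule cumulant_rec[symmetric])
      have "Min S \<in> S - {y}" using assms 3 by simp
      then show "S - {y} \<noteq> {}" by blast
    qed (use assms in auto)
    finally show ?thesis using 3 by simp
  qed
qed

lemma cumulant_shift:
  assumes "finite T" "q {} r = 1"
    and shift: "\<And>S. S \<subseteq> T \<Longrightarrow> q' S r = q S r + (if y \<in> S then c * q (S - {y}) r else 0)"
  shows "cumulant q' T r = cumulant q T r + (if T = {y} then c else 0)"
proof (cases "T = {}")
  case False
  have "q' {} r = 1" using shift[of "{}"] assms(2) by simp
  moreover have "q' S r = (\<Sum>B\<in>{B. Min S \<in> B \<and> B \<subseteq> S}.
      (cumulant q B r + (if B = {y} then c else 0)) * q' (S - B) r)" if "S \<subseteq> T" "S \<noteq> {}" for S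
  proof -
    have fS: "finite S" using that assms(1) by (rule_tac finite_subset)
    have "(cumulant q B r + (if B = {y} then c else 0)) * q' (S - B) r = cumulant q B r * q (S - B) r
        + c * ((if y \<in> S - B then cumulant q B r * q (S - {y} - B) r else 0)
          + (if B = {y} then q (S - B) r else 0))" if "B \<subseteq> S" for B
    proof -
      have "q' (S - B) r = q (S - B) r + (if y \<in> S - B then c * q (S - B - {y}) r else 0)"
        using that \<open>S \<subseteq> T\<close> by (intro shift) auto
      moreover have "S - B - {y} = S - {y} - B" by auto
      ultimately show ?thesis by (cases "B = {y}") (auto simp: algebra_simps)
    qed
    then have "(\<Sum>B\<in>{B. Min S \<in> B \<and> B \<subseteq> S}.
        (cumulant q B r + (if B = {y} then c else 0)) * q' (S - B) r)
      = (\<Sum>B\<in>{B. Min S \<in> B \<and> B \<subseteq> S}. cumulant q B r * q (S - B) r)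
        + c * (\<Sum>B\<in>{B. Min S \<in> B \<and> B \<subseteq> S}.
            (if y \<in> S - B then cumulant q B r * q (S - {y} - B) r else 0)
            + (if B = {y} then q (S - B) r else 0))"
      by (simp add: sum.distrib flip: sum_distrib_left)
    also have "\<dots> = q S r + c * (if y \<in> S then q (S - {y}) r else 0)"
      using cumulant_rec[of S q r, OF fS \<open>S \<noteq> {}\<close> assms(2)]
        cumulant_rec_Diff_singleton[of S q r y, OF fS \<open>S \<noteq> {}\<close> assms(2)]
      by simp
    finally show ?thesis using shift that by simp
  qed
  ultimately show ?thesis
    using cumulant_unique[of T q' r "\<lambda>B. cumulant q B r + (if B = {y} then c else 0)"] assms(1) False
    by simp
qed simp

definition block_induced_prod :: "(nat \<Rightarrow> int \<Rightarrow> rat) \<Rightarrow> nat \<Rightarrow> nat set \<Rightarrow> int \<Rightarrow> rat" where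
  "block_induced_prod f n T =
     int_induced_prod (\<lambda>a. \<Prod>x\<in>T \<inter> {..<n}. f x a) (\<lambda>b. \<Prod>x\<in>T - {..<n}. f x b)"

lemma block_induced_prod_empty [simp]: "block_induced_prod f n {} r = 1"
  by (simp add: block_induced_prod_def int_induced_prod_one_right)

lemma block_induced_prod_singleton: "block_induced_prod f n {x} r = f x r"
  by (cases "x < n")
    (simp_all add: block_induced_prod_def int_induced_prod_one_right insert_Diff_if
      int_induced_prod_commute[of "\<lambda>_. 1"])

lemma block_induced_prod_at_0:
  assumes "finite T" "T \<noteq> {}" "\<And>x. f x 0 = 0"
  shows "block_induced_prod f n T 0 = 0"
proof -
  obtain x where "x \<in> T" using assms(2) by blast
  then have "(\<Prod>x\<in>T \<inter> {..<n}. f x 0) = 0 \<or> (\<Prod>x\<in>T - {..<n}. f x 0) = 0"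
    using assms by (cases "x < n") (auto intro!: prod_zero)
  then show ?thesis by (auto simp: block_induced_prod_def int_induced_prod_0)
qed

lemma int_poly_fun_block_induced_prod:
  "(\<And>x. int_poly_fun (f x)) \<Longrightarrow> int_poly_fun (block_induced_prod f n T)"
  unfolding block_induced_prod_def by (intro int_poly_fun_int_induced_prod int_poly_fun_prod)

lemma block_induced_prod_reflect:
  fixes e :: "nat \<Rightarrow> nat"
  assumes "finite T" and reflect: "\<And>x a. x \<in> T \<Longrightarrow> f x (-1 - a) = (-1) ^ e x * f x a"
  shows "block_induced_prod f n T (-1 - r) = (-1) ^ (\<Sum>x\<in>T. e x) * block_induced_prod f n T r"
proof -
  have prod_reflect: "(\<Prod>x\<in>S. f x (-1 - a)) = (-1) ^ (\<Sum>x\<in>S. e x) * (\<Prod>x\<in>S. f x a)"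
    if "S \<subseteq> T" for S a
    using that by (simp add: reflect subset_eq prod.distrib power_sum)
  let ?s1 = "(-1::rat) ^ (\<Sum>x\<in>T \<inter> {..<n}. e x)" and ?s2 = "(-1::rat) ^ (\<Sum>x\<in>T - {..<n}. e x)"
  have s: "?s1 * ?s2 = (-1) ^ (\<Sum>x\<in>T. e x)"
    using sum.Int_Diff[OF assms(1), of e "{..<n}"] by (simp add: power_add)
  have "int_induced_prod (\<lambda>a. \<Prod>x\<in>T \<inter> {..<n}. f x a) (\<lambda>b. \<Prod>x\<in>T - {..<n}. f x b) (-1 - r)
      = (?s1 * ?s2) * int_induced_prod (\<lambda>a. \<Prod>x\<in>T \<inter> {..<n}. f x a) (\<lambda>b. \<Prod>x\<in>T - {..<n}. f x b) r"
    by (rule int_induced_prod_reflect) (simp_all add: prod_reflect s flip: power_add)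
  then show ?thesis unfolding block_induced_prod_def s .
qed

definition shift_funs :: "(nat \<Rightarrow> int \<Rightarrow> rat) \<Rightarrow> (nat \<Rightarrow> rat) \<Rightarrow> nat set \<Rightarrow> nat \<Rightarrow> int \<Rightarrow> rat" where
  "shift_funs f c U x a = f x a + (if x \<in> U then c x else 0)"

lemma prod_add_at:
  fixes g :: "'a \<Rightarrow> 'b::comm_semiring_1"
  assumes "finite S"
  shows "(\<Prod>x\<in>S. g x + (if x = y then c else 0))
    = (\<Prod>x\<in>S. g x) + (if y \<in> S then c * (\<Prod>x\<in>S - {y}. g x) else 0)"
proof (cases "y \<in> S")
  case True
  have "(\<Prod>x\<in>S - {y}. g x + (if x = y then c else 0)) = (\<Prod>x\<in>S - {y}. g x)"
    by (rule prod.cong) auto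
  then show ?thesis
    using assms True by (simp add: prod.remove[of S y] algebra_simps)
qed (auto intro!: prod.cong)

lemma block_induced_prod_shift_insert:
  assumes "y \<notin> U" "finite T"
  shows "block_induced_prod (shift_funs f c (insert y U)) n T r
    = block_induced_prod (shift_funs f c U) n T r
      + (if y \<in> T then c y * block_induced_prod (shift_funs f c U) n (T - {y}) r else 0)"
proof -
  let ?g = "shift_funs f c U"
  have g: "shift_funs f c (insert y U) x a = ?g x a + (if x = y then c y else 0)" for x a
    using assms(1) by (simp add: shift_funs_def)
  consider "y \<notin> T" | "y \<in> T" "y < n" | "y \<in> T" "\<not> y < n" by blast
  then show ?thesis
  proof cases
    case 1
    then show ?thesis
      using assms(2) by (simp add: block_induced_prod_def g prod_add_at)
  next
    case 2
    then have "(T \<inter> {..<n}) - {y} = (T - {y}) \<inter> {..<n}" "T - {y} - {..<n} = T - {..<n}" by auto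
    then show ?thesis
      using 2 assms(2)
      by (simp add: block_induced_prod_def g prod_add_at int_induced_prod_add_left)
  next
    case 3
    then have "(T - {..<n}) - {y} = (T - {y}) - {..<n}" "(T - {y}) \<inter> {..<n} = T \<inter> {..<n}" by auto
    then show ?thesis
      using 3 assms(2)
      by (simp add: block_induced_prod_def g prod_add_at int_induced_prod_commute[of "\<lambda>a. \<Prod>x\<in>T \<inter> {..<n}. _ x a"]
          int_induced_prod_add_left)
  qed
qed

lemma cumulant_block_induced_prod_shift:
  assumes "finite U" "finite T" "2 \<le> card T"
  shows "cumulant (block_induced_prod (shift_funs f c U) n) T r = cumulant (block_induced_prod f n) T r"
  using assms(1)
proof (induction U rule: finite_induct)
  case empty
  then show ?case by (simp add: shift_funs_def)
next
  case (insert y U)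
  have "cumulant (block_induced_prod (shift_funs f c (insert y U)) n) T r
      = cumulant (block_induced_prod (shift_funs f c U) n) T r + (if T = {y} then c y else 0)"
  proof (rule cumulant_shift[OF assms(2)])
    fix S assume "S \<subseteq> T"
    then show "block_induced_prod (shift_funs f c (insert y U)) n S r
      = block_induced_prod (shift_funs f c U) n S r
        + (if y \<in> S then c y * block_induced_prod (shift_funs f c U) n (S - {y}) r else 0)"
      using insert(2) assms(2) by (intro block_induced_prod_shift_insert) (auto dest: finite_subset)
  qed simp
  moreover have "T \<noteq> {y}" using assms(3) by auto
  ultimately show ?case using insert.IH by simp
qed

section \<open>Power sums over the parts\<close>

lemma minus_one_power_sum_eq:
  assumes "\<And>x. x \<in> B \<Longrightarrow> even (k x + l x)"
  shows "(-1::rat) ^ (\<Sum>x\<in>B. l x) = (-1) ^ (\<Sum>x\<in>B. k x)"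
proof -
  have "(-1::rat) ^ l x = (-1) ^ k x" if "x \<in> B" for x
    using assms[OF that] by (auto simp: minus_one_power_iff)
  then show ?thesis by (simp add: power_sum cong: prod.cong)
qed

lemma coeff_eq_0_if_parity:
  fixes P :: "rat poly"
  assumes parity: "\<And>r::int. poly P (- of_int r) = (-1) ^ e * poly P (of_int r)" and "odd (e + j)"
  shows "coeff P j = 0"
proof -
  define Q where "Q = (\<Sum>i\<le>degree P. monom (coeff P i * ((-1) ^ i - (-1) ^ e)) i)"
  have "poly Q x = poly P (- x) - (-1) ^ e * poly P x" for x
  proof -
    have "poly Q x = (\<Sum>i\<le>degree P. coeff P i * ((-1) ^ i - (-1) ^ e) * x ^ i)"
      by (simp add: Q_def poly_sum poly_monom)
    also have "\<dots> = (\<Sum>i\<le>degree P. coeff P i * (- x) ^ i) - (-1) ^ e * (\<Sum>i\<le>degree P. coeff P i * x ^ i)"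
      by (simp add: power_minus[of x] sum_subtractf sum_distrib_left algebra_simps)
    finally show ?thesis by (simp only: poly_altdef)
  qed
  then have "range (of_int :: int \<Rightarrow> rat) \<subseteq> {x. poly Q x = 0}"
    using parity by auto
  moreover have "infinite (range (of_int :: int \<Rightarrow> rat))"
    by (simp add: finite_image_iff inj_on_def)
  ultimately have "Q = 0"
    using poly_roots_finite finite_subset by blast
  show ?thesis
  proof (cases "j \<le> degree P")
    case True
    have "coeff Q j = coeff P j * ((-1) ^ j - (-1) ^ e)"
      using True by (simp add: Q_def coeff_sum)
    moreover have "(-1::rat) ^ j - (-1) ^ e \<noteq> 0"
      using assms(2) by (cases "even j") (auto simp: minus_one_power_iff)
    ultimately show ?thesis using \<open>Q = 0\<close> by (metis coeff_0 mult_eq_0_iff)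
  qed (simp add: coeff_eq_0)
qed

lemma sum_coeff_faulhaber:
  assumes "\<kappa> 0 = 0" and diff: "\<And>r. \<kappa> r - \<kappa> (r - 1) = poly P (of_int r)"
  shows "\<kappa> (int a) = (\<Sum>j\<le>degree P. coeff P j * faulhaber (j + 1) a)"
proof (induction a)
  case (Suc a)
  have "\<kappa> (int (Suc a)) = \<kappa> (int a) + (\<Sum>j\<le>degree P. coeff P j * of_nat (Suc a) ^ j)"
    using diff[of "int (Suc a)"] by (simp add: poly_altdef algebra_simps)
  then show ?case
    using Suc by (simp add: faulhaber_def sum.distrib[symmetric] algebra_simps)
qed (simp add: assms(1) faulhaber_def)

lemma difference_poly_parity:
  assumes "int_poly_fun \<kappa>" and reflect: "\<And>r. \<kappa> (-1 - r) = (-1) ^ K * \<kappa> r"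
  obtains P where "\<And>r. \<kappa> r - \<kappa> (r - 1) = poly P (of_int r)"
    and "\<And>j. coeff P j \<noteq> 0 \<Longrightarrow> even (K + (j + 1))"
proof -
  obtain P\<kappa> where P\<kappa>: "\<And>r. \<kappa> r = poly P\<kappa> (of_int r)"
    using assms(1) unfolding int_poly_fun_def by blast
  define P where "P = P\<kappa> - pcompose P\<kappa> [:-1, 1:]"
  have diff: "\<kappa> r - \<kappa> (r - 1) = poly P (of_int r)" for r
    by (simp add: P_def P\<kappa> poly_pcompose)
  have "poly P (- of_int r) = (-1) ^ Suc K * poly P (of_int r)" for r :: int
  proof -
    have e: "-1 - (r - 1) = - r" "-1 - r = - r - 1" by simp_all
    have "poly P (- of_int r) = \<kappa> (- r) - \<kappa> (- r - 1)"
      using diff[of "- r"] by simp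
    also have "\<dots> = (-1) ^ K * \<kappa> (r - 1) - (-1) ^ K * \<kappa> r"
      using reflect[of "r - 1"] reflect[of r] unfolding e by simp
    also have "\<dots> = (-1) ^ Suc K * (\<kappa> r - \<kappa> (r - 1))"
      by (simp add: algebra_simps)
    finally show ?thesis by (simp only: diff)
  qed
  then have "even (K + (j + 1))" if "coeff P j \<noteq> 0" for j
    using that coeff_eq_0_if_parity[of P "Suc K" j] by auto
  with diff show ?thesis by (rule that)
qed

lemma T_on_partitions_sum_parts:
  assumes "int_poly_fun \<kappa>" "\<kappa> 0 = 0" and reflect: "\<And>r. \<kappa> (-1 - r) = (-1) ^ K * \<kappa> r"
  shows "T_on_partitions (\<lambda>p. \<Sum>m\<in>set_mset p. of_nat m ^ K * \<kappa> (int (count p m)))"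
proof -
  obtain P where diff: "\<And>r. \<kappa> r - \<kappa> (r - 1) = poly P (of_int r)"
    and admissible: "\<And>j. coeff P j \<noteq> 0 \<Longrightarrow> even (K + (j + 1))"
    using difference_poly_parity[of \<kappa> K, OF assms(1) reflect] by blast
  have "T_on_partitions (\<lambda>p. \<Sum>j\<le>degree P. coeff P j * T0_fun K (j + 1) p)"
  proof (intro T_on_partitions_sum)
    fix j
    show "T_on_partitions (\<lambda>p. coeff P j * T0_fun K (j + 1) p)"
    proof (cases "coeff P j = 0")
      case False
      then show ?thesis
        by (intro T_on_partitions_cmult T_on_partitions_if_T_alg T0_fun_in_T_alg) (use admissible in auto)
    qed (simp add: T_on_partitions_const)
  qed
  then show ?thesis
  proof (rule T_on_partitions_cong)
    fix p assume "is_partition p"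
    then show "(\<Sum>j\<le>degree P. coeff P j * T0_fun K (j + 1) p)
        = (\<Sum>m\<in>set_mset p. of_nat m ^ K * \<kappa> (int (count p m)))"
      by (simp add: T0_fun_eq_sum sum_coeff_faulhaber[OF assms(2) diff] sum_distrib_left
          sum.swap[of _ "set_mset p"] algebra_simps)
  qed
qed

section \<open>The induced product of two monomials\<close>

definition fiber :: "'a set \<Rightarrow> ('a \<Rightarrow> 'b) \<Rightarrow> 'b \<Rightarrow> 'a set" where
  "fiber S k m = {x\<in>S. k x = m}"

lemma prod_sum_eq_sum_PiE_fibers:
  fixes W :: "'a \<Rightarrow> 'b \<Rightarrow> 'c::comm_semiring_1"
  assumes "finite S" "finite M"
  shows "(\<Prod>x\<in>S. \<Sum>m\<in>M. W x m) = (\<Sum>k\<in>PiE S (\<lambda>_. M). \<Prod>m\<in>M. \<Prod>x\<in>fiber S k m. W x m)"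
proof -
  have "(\<Prod>x\<in>S. \<Sum>m\<in>M. W x m) = (\<Sum>k\<in>PiE S (\<lambda>_. M). \<Prod>x\<in>S. W x (k x))"
    using assms by (rule prod_sum_PiE)
  also have "\<dots> = (\<Sum>k\<in>PiE S (\<lambda>_. M). \<Prod>m\<in>M. \<Prod>x\<in>fiber S k m. W x m)"
  proof (rule sum.cong)
    fix k assume "k \<in> PiE S (\<lambda>_. M)"
    then have "(\<Prod>x\<in>S. W x (k x)) = (\<Prod>m\<in>M. \<Prod>x\<in>fiber S k m. W x (k x))"
      unfolding fiber_def using assms by (intro prod.group[symmetric]) auto
    then show "(\<Prod>x\<in>S. W x (k x)) = (\<Prod>m\<in>M. \<Prod>x\<in>fiber S k m. W x m)"
      by (simp add: fiber_def)
  qed simp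
  finally show ?thesis .
qed

lemma prod_fibers_split_block:
  fixes w :: "'m \<Rightarrow> 'a set \<Rightarrow> 'c::comm_semiring_1"
  assumes "finite M" "x0 \<in> S" "k \<in> PiE S (\<lambda>_. M)"
    and rec: "\<And>T. T \<subseteq> S \<Longrightarrow> x0 \<in> T \<Longrightarrow> w (k x0) T = (\<Sum>B\<in>{B. x0 \<in> B \<and> B \<subseteq> T}. v B * w (k x0) (T - B))"
  shows "(\<Prod>m\<in>M. w m (fiber S k m))
    = (\<Sum>B\<in>{B. x0 \<in> B \<and> B \<subseteq> fiber S k (k x0)}. v B * (\<Prod>m\<in>M. w m (fiber (S - B) k m)))"
proof -
  let ?m0 = "k x0"
  have m0: "?m0 \<in> M" using assms(2,3) by auto
  have "(\<Prod>m\<in>M. w m (fiber S k m)) = w ?m0 (fiber S k ?m0) * (\<Prod>m\<in>M - {?m0}. w m (fiber S k m))"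
    using assms(1) m0 by (simp add: prod.remove)
  also have "w ?m0 (fiber S k ?m0) = (\<Sum>B\<in>{B. x0 \<in> B \<and> B \<subseteq> fiber S k ?m0}. v B * w ?m0 (fiber S k ?m0 - B))"
    using assms(2) by (intro rec) (auto simp: fiber_def)
  also have "\<dots> * (\<Prod>m\<in>M - {?m0}. w m (fiber S k m))
      = (\<Sum>B\<in>{B. x0 \<in> B \<and> B \<subseteq> fiber S k ?m0}. v B * (\<Prod>m\<in>M. w m (fiber (S - B) k m)))"
    unfolding sum_distrib_right
  proof (intro sum.cong refl)
    fix B assume "B \<in> {B. x0 \<in> B \<and> B \<subseteq> fiber S k ?m0}"
    then have fe: "fiber (S - B) k m = (if m = ?m0 then fiber S k ?m0 - B else fiber S k m)" for m
      by (auto simp: fiber_def)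
    have "(\<Prod>m\<in>M - {?m0}. w m (fiber (S - B) k m)) = (\<Prod>m\<in>M - {?m0}. w m (fiber S k m))"
      by (rule prod.cong) (auto simp: fe)
    then show "v B * w ?m0 (fiber S k ?m0 - B) * (\<Prod>m\<in>M - {?m0}. w m (fiber S k m))
        = v B * (\<Prod>m\<in>M. w m (fiber (S - B) k m))"
      using assms(1) m0 by (simp add: prod.remove[of M ?m0] fe mult.assoc)
  qed
  finally show ?thesis .
qed

lemma sum_Sigma_PiE_block_reindex:
  assumes "x0 \<in> S"
  shows "(\<Sum>(k, B)\<in>Sigma (PiE S (\<lambda>_. M)) (\<lambda>k. {B. x0 \<in> B \<and> B \<subseteq> fiber S k (k x0)}).
            F (k x0) B (restrict k (S - B)))
       = (\<Sum>(B, m, k)\<in>Sigma {B. x0 \<in> B \<and> B \<subseteq> S} (\<lambda>B. M \<times> PiE (S - B) (\<lambda>_. M)). F m B k)"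
proof (rule sum.reindex_bij_witness[of _ "\<lambda>(B, m, k). (\<lambda>x. if x \<in> B then m else k x, B)"
      "\<lambda>(k, B). (B, k x0, restrict k (S - B))"])
  fix a assume "a \<in> Sigma (PiE S (\<lambda>_. M)) (\<lambda>k. {B. x0 \<in> B \<and> B \<subseteq> fiber S k (k x0)})"
  then obtain k B where kB: "a = (k, B)" "k \<in> PiE S (\<lambda>_. M)" "x0 \<in> B" "B \<subseteq> fiber S k (k x0)"
    by auto
  then have "(\<lambda>x. if x \<in> B then k x0 else restrict k (S - B) x) = k"
    by (auto simp: fiber_def PiE_def extensional_def fun_eq_iff)
  then show "(case (case a of (k, B) \<Rightarrow> (B, k x0, restrict k (S - B))) of
      (B, m, k) \<Rightarrow> (\<lambda>x. if x \<in> B then m else k x, B)) = a"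
    by (simp add: kB(1))
  show "(case a of (k, B) \<Rightarrow> (B, k x0, restrict k (S - B)))
      \<in> Sigma {B. x0 \<in> B \<and> B \<subseteq> S} (\<lambda>B. M \<times> PiE (S - B) (\<lambda>_. M))"
    using kB assms by (auto simp: fiber_def)
  show "(case (case a of (k, B) \<Rightarrow> (B, k x0, restrict k (S - B))) of (B, m, k) \<Rightarrow> F m B k)
      = (case a of (k, B) \<Rightarrow> F (k x0) B (restrict k (S - B)))"
    by (simp add: kB(1))
next
  fix b assume "b \<in> Sigma {B. x0 \<in> B \<and> B \<subseteq> S} (\<lambda>B. M \<times> PiE (S - B) (\<lambda>_. M))"
  then obtain B m k where b: "b = (B, m, k)" "x0 \<in> B" "B \<subseteq> S" "m \<in> M" "k \<in> PiE (S - B) (\<lambda>_. M)"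
    by auto
  then have "restrict (\<lambda>x. if x \<in> B then m else k x) (S - B) = k"
    by (auto simp: PiE_def extensional_def restrict_def fun_eq_iff)
  then show "(case (case b of (B, m, k) \<Rightarrow> (\<lambda>x. if x \<in> B then m else k x, B)) of
      (k, B) \<Rightarrow> (B, k x0, restrict k (S - B))) = b"
    using b by simp
  show "(case b of (B, m, k) \<Rightarrow> (\<lambda>x. if x \<in> B then m else k x, B))
      \<in> Sigma (PiE S (\<lambda>_. M)) (\<lambda>k. {B. x0 \<in> B \<and> B \<subseteq> fiber S k (k x0)})"
    using b by (auto simp: fiber_def PiE_def extensional_def)
qed

lemma sum_PiE_block_reindex:
  assumes "finite S" "x0 \<in> S" "finite M"
  shows "(\<Sum>k\<in>PiE S (\<lambda>_. M). \<Sum>B\<in>{B. x0 \<in> B \<and> B \<subseteq> fiber S k (k x0)}. F (k x0) B (restrict k (S - B)))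
    = (\<Sum>B\<in>{B. x0 \<in> B \<and> B \<subseteq> S}. \<Sum>m\<in>M. \<Sum>k\<in>PiE (S - B) (\<lambda>_. M). F m B k)"
proof -
  have fin: "finite {B. x0 \<in> B \<and> B \<subseteq> T}" if "finite T" for T
    using that by (rule finite_subsets_with)
  have "(\<Sum>k\<in>PiE S (\<lambda>_. M). \<Sum>B\<in>{B. x0 \<in> B \<and> B \<subseteq> fiber S k (k x0)}. F (k x0) B (restrict k (S - B)))
      = (\<Sum>(k, B)\<in>Sigma (PiE S (\<lambda>_. M)) (\<lambda>k. {B. x0 \<in> B \<and> B \<subseteq> fiber S k (k x0)}).
          F (k x0) B (restrict k (S - B)))"
    using assms by (intro sum.Sigma) (auto intro!: finite_PiE fin simp: fiber_def)
  also have "\<dots> = (\<Sum>(B, m, k)\<in>Sigma {B. x0 \<in> B \<and> B \<subseteq> S} (\<lambda>B. M \<times> PiE (S - B) (\<lambda>_. M)). F m B k)"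
    using assms(2) by (rule sum_Sigma_PiE_block_reindex)
  also have "\<dots> = (\<Sum>B\<in>{B. x0 \<in> B \<and> B \<subseteq> S}. \<Sum>(m, k)\<in>M \<times> PiE (S - B) (\<lambda>_. M). F m B k)"
    using assms by (intro sum.Sigma[symmetric]) (auto intro!: fin finite_PiE)
  also have "\<dots> = (\<Sum>B\<in>{B. x0 \<in> B \<and> B \<subseteq> S}. \<Sum>m\<in>M. \<Sum>k\<in>PiE (S - B) (\<lambda>_. M). F m B k)"
    by (simp add: sum.cartesian_product)
  finally show ?thesis .
qed

lemma fiber_restrict [simp]: "fiber S (restrict k S) m = fiber S k m"
  by (auto simp: fiber_def)

lemma sum_PiE_prod_fibers_rec:
  fixes w v :: "'m \<Rightarrow> 'a set \<Rightarrow> 'c::comm_semiring_1"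
  assumes "finite S" "x0 \<in> S" "finite M"
    and rec: "\<And>m T. m \<in> M \<Longrightarrow> T \<subseteq> S \<Longrightarrow> x0 \<in> T \<Longrightarrow>
      w m T = (\<Sum>B\<in>{B. x0 \<in> B \<and> B \<subseteq> T}. v m B * w m (T - B))"
  shows "(\<Sum>k\<in>PiE S (\<lambda>_. M). \<Prod>m\<in>M. w m (fiber S k m))
    = (\<Sum>B\<in>{B. x0 \<in> B \<and> B \<subseteq> S}. (\<Sum>m\<in>M. v m B) * (\<Sum>k\<in>PiE (S - B) (\<lambda>_. M). \<Prod>m\<in>M. w m (fiber (S - B) k m)))"
proof -
  have "(\<Sum>k\<in>PiE S (\<lambda>_. M). \<Prod>m\<in>M. w m (fiber S k m))
      = (\<Sum>k\<in>PiE S (\<lambda>_. M). \<Sum>B\<in>{B. x0 \<in> B \<and> B \<subseteq> fiber S k (k x0)}.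
          v (k x0) B * (\<Prod>m\<in>M. w m (fiber (S - B) (restrict k (S - B)) m)))"
  proof (intro sum.cong refl)
    fix k assume k: "k \<in> PiE S (\<lambda>_. M)"
    then have "k x0 \<in> M" using assms(2) by auto
    then show "(\<Prod>m\<in>M. w m (fiber S k m)) = (\<Sum>B\<in>{B. x0 \<in> B \<and> B \<subseteq> fiber S k (k x0)}.
        v (k x0) B * (\<Prod>m\<in>M. w m (fiber (S - B) (restrict k (S - B)) m)))"
      using prod_fibers_split_block[OF assms(3,2) k, of w "v (k x0)"] rec by simp
  qed
  also have "\<dots> = (\<Sum>B\<in>{B. x0 \<in> B \<and> B \<subseteq> S}. \<Sum>m\<in>M. \<Sum>k\<in>PiE (S - B) (\<lambda>_. M).
          v m B * (\<Prod>m\<in>M. w m (fiber (S - B) k m)))"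
    using assms(1-3) by (rule sum_PiE_block_reindex)
  also have "\<dots> = (\<Sum>B\<in>{B. x0 \<in> B \<and> B \<subseteq> S}.
      (\<Sum>m\<in>M. v m B) * (\<Sum>k\<in>PiE (S - B) (\<lambda>_. M). \<Prod>m\<in>M. w m (fiber (S - B) k m)))"
    by (simp add: sum_product)
  finally show ?thesis .
qed

text \<open>The factors of the two monomials are numbered by \<open>x\<close>; factor \<open>x\<close> is
  \<^term>\<open>T0_fun (kx x) (lx x)\<close>, and the factors \<open>x < n\<close> belong to the first monomial.\<close>
context
  fixes kx lx :: "nat \<Rightarrow> nat" and n :: nat
begin

definition index_weight :: "nat set \<Rightarrow> nat" where
  "index_weight T = (\<Sum>x\<in>T. kx x)"

definition left_block :: "nat set \<Rightarrow> int \<Rightarrow> rat" where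
  "left_block T a = (\<Prod>x\<in>T \<inter> {..<n}. faulhaber_int (lx x) a)"

definition right_block :: "nat set \<Rightarrow> int \<Rightarrow> rat" where
  "right_block T b = (\<Prod>x\<in>T - {..<n}. faulhaber_int (lx x) b)"

definition block_fun :: "nat set \<Rightarrow> int \<Rightarrow> rat" where
  "block_fun = block_induced_prod (\<lambda>x. faulhaber_int (lx x)) n"

definition fiber_sum :: "nat set \<Rightarrow> nat multiset \<Rightarrow> rat" where
  "fiber_sum S p = (\<Sum>k\<in>PiE S (\<lambda>_. set_mset p). \<Prod>m\<in>set_mset p.
      of_nat m ^ index_weight (fiber S k m) * block_fun (fiber S k m) (int (count p m)))"

definition connected_sum :: "nat set \<Rightarrow> nat multiset \<Rightarrow> rat" where
  "connected_sum B p = (\<Sum>m\<in>set_mset p. of_nat m ^ index_weight B * cumulant block_fun B (int (count p m)))"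

lemma prod_T0_fun_eq_sum_PiE:
  assumes "is_partition p" "\<alpha> \<subseteq># p" "\<beta> \<subseteq># p" "n \<le> N"
  shows "(\<Prod>x<n. T0_fun (kx x) (lx x) \<alpha>) * (\<Prod>x\<in>{n..<N}. T0_fun (kx x) (lx x) \<beta>)
    = (\<Sum>k\<in>PiE {..<N} (\<lambda>_. set_mset p). \<Prod>m\<in>set_mset p. of_nat m ^ index_weight (fiber {..<N} k m)
        * left_block (fiber {..<N} k m) (int (count \<alpha> m)) * right_block (fiber {..<N} k m) (int (count \<beta> m)))"
proof -
  define W where "W x m = of_nat m ^ kx x * faulhaber_int (lx x) (int (count (if x < n then \<alpha> else \<beta>) m))"
    for x m
  have T0: "T0_fun (kx x) (lx x) (if x < n then \<alpha> else \<beta>) = (\<Sum>m\<in>set_mset p. W x m)" for x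
    using assms(1-3) by (simp add: W_def T0_fun_eq_sum faulhaber_int_of_nat)
  let ?g = "\<lambda>x. T0_fun (kx x) (lx x) (if x < n then \<alpha> else \<beta>)"
  have "(\<Prod>x<n. T0_fun (kx x) (lx x) \<alpha>) * (\<Prod>x\<in>{n..<N}. T0_fun (kx x) (lx x) \<beta>)
      = (\<Prod>x<n. ?g x) * (\<Prod>x\<in>{n..<N}. ?g x)"
    by (intro arg_cong2[where f = "(*)"] prod.cong) auto
  also have "\<dots> = (\<Prod>x<N. ?g x)"
    using prod.atLeastLessThan_concat[of 0 n N ?g] assms(4) by (simp add: lessThan_atLeast0)
  also have "\<dots> = (\<Sum>k\<in>PiE {..<N} (\<lambda>_. set_mset p). \<Prod>m\<in>set_mset p. \<Prod>x\<in>fiber {..<N} k m. W x m)"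
    by (simp add: T0 prod_sum_eq_sum_PiE_fibers)
  also have "\<dots> = (\<Sum>k\<in>PiE {..<N} (\<lambda>_. set_mset p). \<Prod>m\<in>set_mset p. of_nat m ^ index_weight (fiber {..<N} k m)
        * left_block (fiber {..<N} k m) (int (count \<alpha> m)) * right_block (fiber {..<N} k m) (int (count \<beta> m)))"
  proof (intro sum.cong prod.cong refl)
    fix k :: "nat \<Rightarrow> nat" and m :: nat
    let ?F = "fiber {..<N} k m"
    let ?h = "\<lambda>x. faulhaber_int (lx x) (int (count (if x < n then \<alpha> else \<beta>) m))"
    have "finite ?F" by (simp add: fiber_def)
    then have "(\<Prod>x\<in>?F. ?h x) = (\<Prod>x\<in>?F \<inter> {..<n}. ?h x) * (\<Prod>x\<in>?F - {..<n}. ?h x)"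
      by (rule prod.Int_Diff)
    also have "\<dots> = (\<Prod>x\<in>?F \<inter> {..<n}. faulhaber_int (lx x) (int (count \<alpha> m)))
        * (\<Prod>x\<in>?F - {..<n}. faulhaber_int (lx x) (int (count \<beta> m)))"
      by (intro arg_cong2[where f = "(*)"] prod.cong) auto
    finally have "(\<Prod>x\<in>?F. W x m) = (\<Prod>x\<in>?F. of_nat m ^ kx x) * ((\<Prod>x\<in>?F \<inter> {..<n}. faulhaber_int (lx x) (int (count \<alpha> m)))
        * (\<Prod>x\<in>?F - {..<n}. faulhaber_int (lx x) (int (count \<beta> m))))"
      by (simp add: W_def prod.distrib)
    then show "(\<Prod>x\<in>?F. W x m) = of_nat m ^ index_weight ?F * left_block ?F (int (count \<alpha> m))
        * right_block ?F (int (count \<beta> m))"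
      by (simp add: index_weight_def left_block_def right_block_def power_sum mult.assoc)
  qed
  finally show ?thesis .
qed

lemma block_fun_eq: "block_fun T = int_induced_prod (left_block T) (right_block T)"
  by (simp add: block_fun_def block_induced_prod_def left_block_def[abs_def] right_block_def[abs_def])

lemma sum_coeff_eq_block_fun:
  "(\<Sum>b\<le>c. (\<Sum>a\<le>b. w * left_block T (int a) * right_block T (int (b - a))) * coeff [:1, -1:] (c - b))
    = w * block_fun T (int c)"
proof -
  have "(\<Sum>b\<le>c. (\<Sum>a\<le>b. w * left_block T (int a) * right_block T (int (b - a))) * coeff [:1, -1:] (c - b))
      = w * nat_induced_prod (\<lambda>a. left_block T (int a)) (\<lambda>b. right_block T (int b)) c"
    by (simp add: nat_induced_prod_def sum_distrib_left mult_ac)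
  then show ?thesis by (simp add: nat_induced_prod_eq_int_induced_prod block_fun_eq)
qed

lemma induced_prod_eq_fiber_sum:
  assumes "is_partition p" "n \<le> N"
  shows "induced_prod (\<lambda>\<alpha>. \<Prod>x<n. T0_fun (kx x) (lx x) \<alpha>) (\<lambda>\<beta>. \<Prod>x\<in>{n..<N}. T0_fun (kx x) (lx x) \<beta>) p
    = fiber_sum {..<N} p"
proof -
  let ?M = "set_mset p" and ?K = "PiE {..<N} (\<lambda>_. set_mset p)"
  define Y where "Y k m a b = of_nat m ^ index_weight (fiber {..<N} k m)
    * left_block (fiber {..<N} k m) (int a) * right_block (fiber {..<N} k m) (int b)" for k m a b
  have "induced_prod (\<lambda>\<alpha>. \<Prod>x<n. T0_fun (kx x) (lx x) \<alpha>) (\<lambda>\<beta>. \<Prod>x\<in>{n..<N}. T0_fun (kx x) (lx x) \<beta>) p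
      = (\<Sum>\<rho>\<in>{\<rho>. \<rho> \<subseteq># p}. (\<Sum>\<alpha>\<in>{\<alpha>. \<alpha> \<subseteq># \<rho>}. \<Sum>k\<in>?K. \<Prod>m\<in>?M. Y k m (count \<alpha> m) (count \<rho> m - count \<alpha> m))
          * (\<Prod>m\<in>?M. coeff [:1, -1:] (count p m - count \<rho> m)))"
    unfolding induced_prod_eq[OF assms(1)]
  proof (intro sum.cong refl arg_cong2[where f = "(*)"])
    fix \<rho> \<alpha> assume "\<rho> \<in> {\<rho>. \<rho> \<subseteq># p}" "\<alpha> \<in> {\<alpha>. \<alpha> \<subseteq># \<rho>}"
    then have "\<alpha> \<subseteq># p" "\<rho> - \<alpha> \<subseteq># p"
      by (auto intro: subset_mset.order_trans[OF diff_subset_eq_self])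
    then show "(\<Prod>x<n. T0_fun (kx x) (lx x) \<alpha>) * (\<Prod>x\<in>{n..<N}. T0_fun (kx x) (lx x) (\<rho> - \<alpha>))
        = (\<Sum>k\<in>?K. \<Prod>m\<in>?M. Y k m (count \<alpha> m) (count \<rho> m - count \<alpha> m))"
      using prod_T0_fun_eq_sum_PiE[OF assms(1) _ _ assms(2)] by (simp add: Y_def)
  next
    fix \<rho> assume "\<rho> \<in> {\<rho>. \<rho> \<subseteq># p}"
    then show "partition_series_inv (p - \<rho>) = (\<Prod>m\<in>?M. coeff [:1, -1:] (count p m - count \<rho> m))"
      using partition_series_inv_eq_prod[OF assms(1), of "p - \<rho>"] by simp
  qed
  also have "\<dots> = (\<Sum>k\<in>?K. \<Sum>\<rho>\<in>{\<rho>. \<rho> \<subseteq># p}.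
      (\<Sum>\<alpha>\<in>{\<alpha>. \<alpha> \<subseteq># \<rho>}. \<Prod>m\<in>?M. Y k m (count \<alpha> m) (count \<rho> m - count \<alpha> m))
        * (\<Prod>m\<in>?M. coeff [:1, -1:] (count p m - count \<rho> m)))"
    by (subst sum.swap) (simp add: sum_distrib_right sum.swap[of _ "{\<alpha>. \<alpha> \<subseteq># _}"])
  also have "\<dots> = (\<Sum>k\<in>?K. \<Prod>m\<in>?M. \<Sum>b\<le>count p m. (\<Sum>a\<le>b. Y k m a (b - a)) * coeff [:1, -1:] (count p m - b))"
    by (intro sum.cong refl sum_submultisets_conv_prod_count) auto
  also have "\<dots> = fiber_sum {..<N} p"
    unfolding fiber_sum_def Y_def sum_coeff_eq_block_fun ..
  finally show ?thesis .
qed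

lemma fiber_sum_empty: "fiber_sum {} p = 1"
  by (simp add: fiber_sum_def fiber_def index_weight_def block_fun_def)

lemma fiber_sum_rec:
  assumes "finite S" "S \<noteq> {}"
  shows "fiber_sum S p = (\<Sum>B\<in>{B. Min S \<in> B \<and> B \<subseteq> S}. connected_sum B p * fiber_sum (S - B) p)"
proof -
  have "fiber_sum S p = (\<Sum>B\<in>{B. Min S \<in> B \<and> B \<subseteq> S}.
      (\<Sum>m\<in>set_mset p. of_nat m ^ index_weight B * cumulant block_fun B (int (count p m)))
      * (\<Sum>k\<in>PiE (S - B) (\<lambda>_. set_mset p). \<Prod>m\<in>set_mset p.
          of_nat m ^ index_weight (fiber (S - B) k m) * block_fun (fiber (S - B) k m) (int (count p m))))"
    unfolding fiber_sum_def
  proof (rule sum_PiE_prod_fibers_rec[OF assms(1) Min_in[OF assms] finite_set_mset])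
    fix m :: nat and T assume T: "T \<subseteq> S" "Min S \<in> T"
    then have "finite T" "T \<noteq> {}" using assms(1) finite_subset by auto
    moreover have "Min T = Min S"
      using T assms(1) \<open>finite T\<close> by (intro Min_eqI) auto
    moreover have "index_weight T = index_weight B + index_weight (T - B)" if "B \<subseteq> T" for B
      using that \<open>finite T\<close> by (simp add: index_weight_def sum.subset_diff)
    ultimately have "(\<Sum>B\<in>{B. Min S \<in> B \<and> B \<subseteq> T}.
          of_nat m ^ index_weight B * cumulant block_fun B (int (count p m))
          * (of_nat m ^ index_weight (T - B) * block_fun (T - B) (int (count p m))))
        = of_nat m ^ index_weight T * (\<Sum>B\<in>{B. Min T \<in> B \<and> B \<subseteq> T}.
          cumulant block_fun B (int (count p m)) * block_fun (T - B) (int (count p m)))"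
      by (auto simp: sum_distrib_left power_add mult_ac intro!: sum.cong)
    also have "\<dots> = of_nat m ^ index_weight T * block_fun T (int (count p m))"
      using \<open>finite T\<close> \<open>T \<noteq> {}\<close> by (simp add: cumulant_rec[symmetric] block_fun_def)
    finally show "of_nat m ^ index_weight T * block_fun T (int (count p m))
      = (\<Sum>B\<in>{B. Min S \<in> B \<and> B \<subseteq> T}. of_nat m ^ index_weight B * cumulant block_fun B (int (count p m))
          * (of_nat m ^ index_weight (T - B) * block_fun (T - B) (int (count p m))))" ..
  qed
  then show ?thesis unfolding connected_sum_def fiber_sum_def .
qed

text \<open>Replacing \<open>F\<^sub>1\<close> by \<open>F\<^sub>1 + 1/2\<close> does not change cumulants of blocks of size at
  least two, and afterwards every factor is symmetric or antisymmetric under \<open>r \<mapsto> -1-r\<close>.\<close>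
lemma cumulant_block_fun_reflect:
  assumes "finite B" "2 \<le> card B" and admissible: "\<And>x. x \<in> B \<Longrightarrow> 1 \<le> lx x \<and> even (kx x + lx x)"
  shows "cumulant block_fun B (-1 - r) = (-1) ^ index_weight B * cumulant block_fun B r"
proof -
  define c where "c x = (if lx x = 1 then 1/2 else 0 :: rat)" for x
  let ?f = "shift_funs (\<lambda>x. faulhaber_int (lx x)) c B"
  have "cumulant (block_induced_prod ?f n) B (-1 - r)
      = (-1) ^ (\<Sum>x\<in>B. lx x) * cumulant (block_induced_prod ?f n) B r"
  proof (rule cumulant_reflect[OF assms(1)])
    fix S s assume "S \<subseteq> B"
    moreover have "?f x (-1 - a) = (-1) ^ lx x * ?f x a" if "x \<in> B" for x a
    proof -
      have "?f x b = faulhaber_int_sym (lx x) b" for b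
        using that by (simp add: shift_funs_def c_def faulhaber_int_sym_def)
      then show ?thesis using that admissible by (simp add: faulhaber_int_sym_reflect)
    qed
    ultimately show "block_induced_prod ?f n S (-1 - s) = (-1) ^ (\<Sum>x\<in>S. lx x) * block_induced_prod ?f n S s"
      using assms(1) by (intro block_induced_prod_reflect) (auto dest: finite_subset)
  qed
  then show ?thesis
    using cumulant_block_induced_prod_shift[OF assms(1,1,2)] minus_one_power_sum_eq[of B kx lx] admissible
    by (simp add: block_fun_def index_weight_def)
qed

lemma connected_sum_in_T:
  assumes "finite B" "B \<noteq> {}" and admissible: "\<And>x. x \<in> B \<Longrightarrow> 1 \<le> lx x \<and> even (kx x + lx x)"
  shows "T_on_partitions (connected_sum B)"
proof (cases "card B = 1")
  case True
  then obtain x where B: "B = {x}" by (auto simp: card_Suc_eq)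
  have "T_on_partitions (T0_fun (kx x) (lx x))"
    using admissible B by (intro T_on_partitions_if_T_alg T0_fun_in_T_alg) auto
  then show ?thesis
  proof (rule T_on_partitions_cong)
    fix p assume "is_partition p"
    then show "T0_fun (kx x) (lx x) p = connected_sum B p"
      by (simp add: B connected_sum_def T0_fun_eq_sum cumulant_singleton block_fun_def
          block_induced_prod_singleton index_weight_def faulhaber_int_of_nat)
  qed
next
  case False
  moreover have "card B \<noteq> 0" using assms(1,2) by simp
  ultimately have "2 \<le> card B" by linarith
  have "T_on_partitions (\<lambda>p. \<Sum>m\<in>set_mset p. of_nat m ^ index_weight B * cumulant block_fun B (int (count p m)))"
  proof (rule T_on_partitions_sum_parts)
    show "int_poly_fun (cumulant block_fun B)"
      unfolding block_fun_def
      by (intro int_poly_fun_cumulant int_poly_fun_block_induced_prod int_poly_fun_faulhaber_int assms(1))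
    show "cumulant block_fun B 0 = 0"
      unfolding block_fun_def using assms(1) by (intro cumulant_eq_0 block_induced_prod_at_0) auto
    show "cumulant block_fun B (-1 - r) = (-1) ^ index_weight B * cumulant block_fun B r" for r
      using assms(1) \<open>2 \<le> card B\<close> admissible by (rule cumulant_block_fun_reflect)
  qed
  then show ?thesis unfolding connected_sum_def .
qed

lemma fiber_sum_in_T:
  assumes "finite S" "\<And>x. x \<in> S \<Longrightarrow> 1 \<le> lx x \<and> even (kx x + lx x)"
  shows "T_on_partitions (fiber_sum S)"
  using assms
proof (induction S rule: finite_psubset_induct)
  case (psubset S)
  show ?case
  proof (cases "S = {}")
    case True
    then show ?thesis by (simp add: fiber_sum_empty T_on_partitions_const)
  next
    case False
    have "T_on_partitions (\<lambda>p. \<Sum>B\<in>{B. Min S \<in> B \<and> B \<subseteq> S}. connected_sum B p * fiber_sum (S - B) p)"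
    proof (intro T_on_partitions_sum T_on_partitions_mult)
      fix B assume B: "B \<in> {B. Min S \<in> B \<and> B \<subseteq> S}"
      then show "T_on_partitions (connected_sum B)"
        using psubset.prems psubset.hyps by (intro connected_sum_in_T) (auto dest: finite_subset)
      have "S - B \<subset> S" using B by auto
      then show "T_on_partitions (fiber_sum (S - B))"
        using psubset.prems by (intro psubset.IH) auto
    qed
    then show ?thesis
      using psubset.hyps False by (simp add: fiber_sum_rec[symmetric])
  qed
qed

end

lemma T0_monomial_eq_prod: "T0_monomial ks p = (\<Prod>x<length ks. T0_fun (fst (ks ! x)) (snd (ks ! x)) p)"
  by (induction ks) (auto simp: T0_monomial_def prod.lessThan_Suc_shift simp del: prod.lessThan_Suc)

lemma induced_prod_T0_monomials_in_T:
  assumes "admissible_indices ks" "admissible_indices ks'"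
  shows "T_on_partitions (induced_prod (T0_monomial ks) (T0_monomial ks'))"
proof -
  define kx where "kx x = fst ((ks @ ks') ! x)" for x
  define lx where "lx x = snd ((ks @ ks') ! x)" for x
  let ?n = "length ks" and ?N = "length (ks @ ks')"
  have "T0_monomial ks = (\<lambda>\<alpha>. \<Prod>x<?n. T0_fun (kx x) (lx x) \<alpha>)"
    by (simp add: fun_eq_iff T0_monomial_eq_prod kx_def lx_def nth_append)
  moreover have "T0_monomial ks' = (\<lambda>\<beta>. \<Prod>x\<in>{?n..<?N}. T0_fun (kx x) (lx x) \<beta>)"
    using prod.shift_bounds_nat_ivl[of "\<lambda>x. T0_fun (kx x) (lx x) _" 0 ?n "length ks'"]
    by (simp add: fun_eq_iff T0_monomial_eq_prod kx_def lx_def nth_append lessThan_atLeast0 add.commute)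
  moreover have "T_on_partitions (fiber_sum kx lx ?n {..<?N})"
  proof (rule fiber_sum_in_T)
    fix x assume "x \<in> {..<?N}"
    have "(kx x, lx x) = (ks @ ks') ! x" by (simp add: kx_def lx_def)
    also have "\<dots> \<in> set (ks @ ks')" using \<open>x \<in> {..<?N}\<close> by (intro nth_mem) simp
    finally have "(kx x, lx x) \<in> set (ks @ ks')" .
    then show "1 \<le> lx x \<and> even (kx x + lx x)"
      using assms by (auto simp: admissible_indices_def)
  qed simp
  ultimately show ?thesis
    by (elim T_on_partitions_cong) (simp add: induced_prod_eq_fiber_sum)
qed

lemma induced_prod_T0_span_in_T:
  assumes "f \<in> T0_span" "g \<in> T0_span"
  shows "T_on_partitions (induced_prod f g)"
proof -
  have monomial_left: "T_on_partitions (induced_prod (T0_monomial ks) g)"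
    if "admissible_indices ks" "g \<in> T0_span" for ks g
    using that(2)
  proof (induction g rule: T0_span.induct)
    case (monomial ks')
    then show ?case using induced_prod_T0_monomials_in_T that(1) by blast
  next
    case (add g g')
    then show ?case
      by (simp add: induced_prod_commute[of "T0_monomial ks"] induced_prod_add_left T_on_partitions_add)
  next
    case (cmult g c)
    then show ?case
      by (simp add: induced_prod_commute[of "T0_monomial ks"] induced_prod_cmult_left T_on_partitions_cmult)
  qed
  show ?thesis
    using assms(1)
  proof (induction f rule: T0_span.induct)
    case (monomial ks)
    then show ?case using monomial_left assms(2) by blast
  next
    case (add f f')
    then show ?case by (simp add: induced_prod_add_left T_on_partitions_add)
  next
    case (cmult f c)
    then show ?case by (simp add: induced_prod_cmult_left T_on_partitions_cmult)
  qed
qed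

theorem theorem4p2p1:
  assumes "f \<in> T_alg" and "g \<in> T_alg"
  shows "\<exists>h\<in>T_alg. u_bracket h = ser_mult (u_bracket f) (u_bracket g)"
proof -
  have "T_on_partitions (induced_prod f g)"
    using assms by (intro induced_prod_T0_span_in_T T_alg_subset_T0_span)
  then obtain h where "h \<in> T_alg" and "\<And>p. is_partition p \<Longrightarrow> h p = induced_prod f g p"
    unfolding T_on_partitions_def by blast
  then have "u_bracket h = u_bracket (induced_prod f g)"
    by (intro u_bracket_cong) simp
  then show ?thesis
    using \<open>h \<in> T_alg\<close> by (auto simp: u_bracket_induced_prod)
qed

end
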